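(* Let $B_1$ and $B_2$ be bouquets whose signed intersection graphs $SI(B_1)$ and $SI(B_2)$ are isomorphic (via a graph isomorphism preserving signs). Then $P_\bullet(B_1,x)=P_\bullet(B_2,x)$ for every $\bullet\in\{\langle\delta\rangle,\langle\delta\tau\rangle,\langle\tau\delta\tau\rangle,\langle\delta,\tau\rangle\}$.
   Context: A ribbon graph $G=(V(G),E(G))$ is a (orientable or non-orientable) surface with boundary, represented as the union of a set $V(G)$ of vertex discs and a set $E(G)$ of edge discs (ribbons) such that vertices and edges intersect in disjoint line segments, each such segment lies on the boundary of exactly one vertex and exactly one edge, and every edge contains exactly two such segments. $v(G)$ denotes the number of vertices. A bouquet is a ribbon graph with exactly one vertex. A loop is non-orientable if the ribbon together with its vertex forms a Möbius band, and orientable otherwise. Two loops of a bouquet are interlaced if their ends alternate in the cyclic order around the vertex boundary. The intersection graph $I(B)$ of a bouquet $B$ has vertex set $E(B)$, two vertices adjacent iff the loops are interlaced; the signed intersection graph $SI(B)$ is $I(B)$ with each vertex signed $+$ if the loop is orientable and $-$ if non-orientable. For $A\subseteq E(G)$, the partial dual $G^{\delta(A)}$ is obtained by gluing a disc along each boundary component of the spanning ribbon subgraph $(V(G),A)$ (these discs become the vertex discs), removing the interiors of the original vertex discs, and keeping the edge ribbons. The partial Petrial $G^{\tau(A)}$ adds a half-twist to each edge in $A$. For a word $w=w_1\cdots w_n$ over $\{\delta,\tau\}$, $G^{w(A)}=(\cdots(G^{w_n(A)})^{w_{n-1}(A)}\cdots)^{w_1(A)}$ (rightmost letter applied first), $G^{1(A)}=G$,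 and $G^{\xi(A)\pi(B)}=(G^{\xi(A)})^{\pi(B)}$. Vertex polynomials (sums over ordered partitions of $E(G)$ into pairwise disjoint, possibly empty parts): $P_{\langle\delta\rangle}(G,x)=\sum_{A\subseteq E(G)}x^{v(G^{\delta(A)})}$; $P_{\langle\tau\delta\tau\rangle}(G,x)=\sum_{A\subseteq E(G)}x^{v(G^{\tau\delta\tau(A)})}$; $P_{\langle\delta\tau\rangle}(G,x)=\sum_{(A_1,A_2,A_3)}x^{v(G^{1(A_1)\tau\delta(A_2)\delta\tau(A_3)})}$; $P_{\langle\delta,\tau\rangle}(G,x)=\sum_{(A_1,\dots,A_6)}x^{v(G^{1(A_1)\delta(A_2)\tau(A_3)\tau\delta(A_4)\delta\tau(A_5)\tau\delta\tau(A_6)})}$. *)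

theory Defs
  imports "HOL-Computational_Algebra.Polynomial" "HOL-Library.FuncSet"
begin

text \<open>Combinatorial model of ribbon graphs: graph-encoded maps (gems).
A ribbon graph is given by a finite set of flags with three fixed-point-free
involutions r0 (changes vertex), r1 (changes edge), r2 (changes side/face),
such that r0 and r2 commute and r0 x differs from r2 x.
Vertices without any incident edge are not visible in flags, so they are counted
separately by the field isov.\<close>

record 'f rg =
  flags :: "'f set"
  r0 :: "'f \<Rightarrow> 'f"
  r1 :: "'f \<Rightarrow> 'f"
  r2 :: "'f \<Rightarrow> 'f"
  isov :: nat

definition fpf_invol :: "'f set \<Rightarrow> ('f \<Rightarrow> 'f) \<Rightarrow> bool" where
  "fpf_invol X f \<longleftrightarrow> (\<forall>x\<in>X. f x \<in> X \<and> f (f x) = x \<and> f x \<noteq> x)"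

definition ribbon_graph :: "'f rg \<Rightarrow> bool" where
  "ribbon_graph G \<longleftrightarrow> finite (flags G)
     \<and> fpf_invol (flags G) (r0 G) \<and> fpf_invol (flags G) (r1 G) \<and> fpf_invol (flags G) (r2 G)
     \<and> (\<forall>x\<in>flags G. r0 G (r2 G x) = r2 G (r0 G x) \<and> r0 G x \<noteq> r2 G x)"

definition orbit_of :: "('f \<Rightarrow> 'f) set \<Rightarrow> 'f \<Rightarrow> 'f set" where
  "orbit_of fs x = {y. (x, y) \<in> {(z, f z) | z f. f \<in> fs}\<^sup>*}"

definition vertices :: "'f rg \<Rightarrow> 'f set set" where
  "vertices G = {orbit_of {r1 G, r2 G} x | x. x \<in> flags G}"

definition edges :: "'f rg \<Rightarrow> 'f set set" where
  "edges G = {orbit_of {r0 G, r2 G} x | x. x \<in> flags G}"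

definition nv :: "'f rg \<Rightarrow> nat" where
  "nv G = card (vertices G) + isov G"

definition pdual :: "'f set set \<Rightarrow> 'f rg \<Rightarrow> 'f rg" where
  "pdual A G = G\<lparr> r0 := (\<lambda>x. if x \<in> \<Union>A then r2 G x else r0 G x),
                  r2 := (\<lambda>x. if x \<in> \<Union>A then r0 G x else r2 G x) \<rparr>"

definition ptwist :: "'f set set \<Rightarrow> 'f rg \<Rightarrow> 'f rg" where
  "ptwist A G = G\<lparr> r0 := (\<lambda>x. if x \<in> \<Union>A then r0 G (r2 G x) else r0 G x) \<rparr>"

text \<open>Words: rightmost letter applied first.
  G^{td(A)} = (G^{d(A)})^{t(A)}, G^{dt(A)} = (G^{t(A)})^{d(A)}, G^{tdt(A)}.\<close>
definition op_td :: "'f set set \<Rightarrow> 'f rg \<Rightarrow> 'f rg" where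
  "op_td A G = ptwist A (pdual A G)"
definition op_dt :: "'f set set \<Rightarrow> 'f rg \<Rightarrow> 'f rg" where
  "op_dt A G = pdual A (ptwist A G)"
definition op_tdt :: "'f set set \<Rightarrow> 'f rg \<Rightarrow> 'f rg" where
  "op_tdt A G = ptwist A (pdual A (ptwist A G))"

definition part :: "'f rg \<Rightarrow> ('f set \<Rightarrow> nat) \<Rightarrow> nat \<Rightarrow> 'f set set" where
  "part G c i = {e \<in> edges G. c e = i}"

definition P_d :: "'f rg \<Rightarrow> int poly" where
  "P_d G = (\<Sum>A\<in>Pow (edges G). monom 1 (nv (pdual A G)))"

definition P_tdt :: "'f rg \<Rightarrow> int poly" where
  "P_tdt G = (\<Sum>A\<in>Pow (edges G). monom 1 (nv (op_tdt A G)))"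

text \<open>Ordered partitions (A1,A2,A3) = colourings c : E(G) -> {0,1,2};
 G^{1(A1) td(A2) dt(A3)} = ((G^{1(A1)})^{td(A2)})^{dt(A3)}.\<close>
definition P_dt :: "'f rg \<Rightarrow> int poly" where
  "P_dt G = (\<Sum>c\<in>edges G \<rightarrow>\<^sub>E {..<3::nat}.
      monom 1 (nv (op_dt (part G c 2) (op_td (part G c 1) G))))"

text \<open>Ordered partitions (A1,...,A6) = colourings c : E(G) -> {0,...,5}.\<close>
definition P_dt_full :: "'f rg \<Rightarrow> int poly" where
  "P_dt_full G = (\<Sum>c\<in>edges G \<rightarrow>\<^sub>E {..<6::nat}.
      monom 1 (nv (op_tdt (part G c 5) (op_dt (part G c 4) (op_td (part G c 3)
                   (ptwist (part G c 2) (pdual (part G c 1) G)))))))"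

definition bouquet :: "'f rg \<Rightarrow> bool" where
  "bouquet G \<longleftrightarrow> ribbon_graph G \<and> nv G = 1"

text \<open>Walking around the boundary of the (single) vertex of a bouquet, starting at a
fixed flag: alternately r2 (staying on the same edge end) and r1 (moving to the next end).
Edge ends are the pairs of flags at positions 2j, 2j+1.\<close>
fun walk :: "'f rg \<Rightarrow> 'f \<Rightarrow> nat \<Rightarrow> 'f" where
  "walk G x 0 = x"
| "walk G x (Suc k) = (if even k then r2 G else r1 G) (walk G x k)"

definition pos :: "'f rg \<Rightarrow> 'f \<Rightarrow> nat" where
  "pos G y = (LEAST k. walk G (SOME x. x \<in> flags G) k = y)"

text \<open>A loop e is orientable iff r0 reverses the direction of traversal between its two ends.\<close>
definition orientable_loop :: "'f rg \<Rightarrow> 'f set \<Rightarrow> bool" where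
  "orientable_loop G e \<longleftrightarrow> (\<forall>x\<in>e. even (pos G x) \<longleftrightarrow> odd (pos G (r0 G x)))"

definition end_pos :: "'f rg \<Rightarrow> 'f set \<Rightarrow> nat set" where
  "end_pos G e = (\<lambda>y. pos G y div 2) ` e"

definition interlaced :: "'f rg \<Rightarrow> 'f set \<Rightarrow> 'f set \<Rightarrow> bool" where
  "interlaced G e f \<longleftrightarrow> e \<noteq> f \<and>
     (\<exists>p1\<in>end_pos G e. \<exists>p2\<in>end_pos G e. \<exists>q1\<in>end_pos G f. \<exists>q2\<in>end_pos G f.
        (p1 < q1 \<and> q1 < p2 \<and> p2 < q2) \<or> (q1 < p1 \<and> p1 < q2 \<and> q2 < p2))"

definition SI_iso :: "'a rg \<Rightarrow> 'b rg \<Rightarrow> bool" where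
  "SI_iso B1 B2 \<longleftrightarrow> (\<exists>\<phi>. bij_betw \<phi> (edges B1) (edges B2)
     \<and> (\<forall>e\<in>edges B1. \<forall>f\<in>edges B1. interlaced B1 e f \<longleftrightarrow> interlaced B2 (\<phi> e) (\<phi> f))
     \<and> (\<forall>e\<in>edges B1. orientable_loop B1 e \<longleftrightarrow> orientable_loop B2 (\<phi> e)))"

end

theory Submission
  imports Defs
begin

text \<open>Walking once around the single vertex of a bouquet lists its flags as positions
  \<open>0, \<dots>, n - 1\<close>; positions \<open>2j\<close> and \<open>2j + 1\<close> form the \<open>j\<close>-th end of a loop.
  Every operation occurring in the four polynomials keeps the flags and r1 of a bouquet and
  changes r2 loop by loop into r2, r0 or r0 r2. So the vertices of the result are the orbits
  of r1 and the modified involution, and 2 to the number of vertices counts the flag sets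
  closed under both. Such a set is determined by whether it contains the starting flag and by
  the set T of loops whose two sides it separates: along the walk, membership flips exactly at
  the ends of loops in T. Closedness under the modified r2 becomes a linear system over GF(2)
  for T: for every loop e touched by the operation, the number of loops of T interlaced with e,
  plus one if e is in T and carries a diagonal entry, is even. The system is written in terms
  of the signed intersection graph alone, so isomorphic signed intersection graphs give equally
  many vertices after every operation, hence equal polynomials.\<close>

section \<open>Orbits of involutions\<close>

definition involution_on :: "'f set \<Rightarrow> ('f \<Rightarrow> 'f) \<Rightarrow> bool" where
  "involution_on F f \<longleftrightarrow> (\<forall>x\<in>F. f x \<in> F \<and> f (f x) = x)"

definition orbits :: "('f \<Rightarrow> 'f) set \<Rightarrow> 'f set \<Rightarrow> 'f set set" where
  "orbits fs F = {orbit_of fs x | x. x \<in> F}"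

definition closed_under :: "('f \<Rightarrow> 'f) set \<Rightarrow> 'f set \<Rightarrow> bool" where
  "closed_under fs S \<longleftrightarrow> (\<forall>x\<in>S. \<forall>f\<in>fs. f x \<in> S)"

lemma vertices_eq_orbits: "vertices G = orbits {r1 G, r2 G} (flags G)"
  by (simp add: vertices_def orbits_def)

lemma orbits_eq_image: "orbits fs F = orbit_of fs ` F"
  by (auto simp: orbits_def)

lemma orbit_of_refl: "x \<in> orbit_of fs x"
  by (simp add: orbit_of_def)

lemma orbit_of_step: "y \<in> orbit_of fs x \<Longrightarrow> f \<in> fs \<Longrightarrow> f y \<in> orbit_of fs x"
  unfolding orbit_of_def by (auto intro: rtrancl_into_rtrancl)

lemma orbit_of_least:
  assumes "x \<in> S" and "closed_under fs S"
  shows "orbit_of fs x \<subseteq> S"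
proof
  fix y assume "y \<in> orbit_of fs x"
  then have "(x, y) \<in> {(z, f z) | z f. f \<in> fs}\<^sup>*" by (simp add: orbit_of_def)
  then show "y \<in> S"
    by (induction rule: rtrancl_induct) (use assms in \<open>auto simp: closed_under_def\<close>)
qed

lemma closed_under_orbit_of: "closed_under fs (orbit_of fs x)"
  by (simp add: closed_under_def orbit_of_step)

lemma orbit_of_sym:
  assumes "x \<in> F" "\<forall>f\<in>fs. involution_on F f" "y \<in> orbit_of fs x"
  shows "x \<in> orbit_of fs y"
proof -
  let ?R = "{(z, f z) | z f. f \<in> fs}"
  have "(x, y) \<in> ?R\<^sup>*" using assms(3) by (simp add: orbit_of_def)
  then have "(y, x) \<in> ?R\<^sup>* \<and> y \<in> F"
  proof (induction rule: rtrancl_induct)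
    case base
    then show ?case using assms(1) by simp
  next
    case (step y z)
    then obtain f where f: "f \<in> fs" "z = f y" by blast
    then have "f z = y" "z \<in> F"
      using assms(2) step.IH by (auto simp: involution_on_def)
    then have "(z, y) \<in> ?R" using f by force
    then show ?case using step.IH \<open>z \<in> F\<close> by (meson converse_rtrancl_into_rtrancl)
  qed
  then show ?thesis by (simp add: orbit_of_def)
qed

lemma orbit_of_eq:
  assumes "x \<in> F" "\<forall>f\<in>fs. involution_on F f" "y \<in> orbit_of fs x"
  shows "orbit_of fs y = orbit_of fs x"
  using orbit_of_least[OF assms(3) closed_under_orbit_of]
    orbit_of_least[OF orbit_of_sym[OF assms] closed_under_orbit_of] by blast

lemma involution_closed_mem_iff:
  assumes "involution_on F h" "S \<subseteq> F" "\<forall>x\<in>S. h x \<in> S" "y \<in> F"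
  shows "h y \<in> S \<longleftrightarrow> y \<in> S"
  using assms unfolding involution_on_def by metis

lemma orbit_of_subset_agree:
  assumes "x \<in> F" "closed_under fs F" "\<forall>g\<in>gs. \<exists>f\<in>fs. \<forall>y\<in>F. g y = f y"
  shows "orbit_of gs x \<subseteq> orbit_of fs x"
proof (rule orbit_of_least[OF orbit_of_refl], unfold closed_under_def, intro ballI)
  fix y g assume y: "y \<in> orbit_of fs x" and g: "g \<in> gs"
  obtain f where "f \<in> fs" "\<forall>y\<in>F. g y = f y" using assms(3) g by blast
  moreover have "y \<in> F" using orbit_of_least[OF assms(1,2)] y by blast
  ultimately show "g y \<in> orbit_of fs x" using orbit_of_step[OF y] by simp
qed

lemma orbit_mem_if_subset_Union:
  assumes invs: "\<forall>f\<in>fs. involution_on F f"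
    and V: "V \<in> orbits fs F" and U: "U \<subseteq> orbits fs F" and VU: "V \<subseteq> \<Union>U"
  shows "V \<in> U"
proof -
  obtain x where x: "x \<in> F" "V = orbit_of fs x" using V unfolding orbits_def by blast
  then have "x \<in> V" by (simp add: orbit_of_refl)
  then obtain V' where V': "V' \<in> U" "x \<in> V'" using VU by blast
  then obtain y where y: "y \<in> F" "V' = orbit_of fs y" using U unfolding orbits_def by blast
  have "x \<in> orbit_of fs y" using V'(2) y(2) by simp
  from orbit_of_eq[OF y(1) invs this] have "V = V'" using x(2) y(2) by simp
  then show ?thesis using V'(1) by simp
qed

lemma inj_on_Union_orbits:
  assumes "\<forall>f\<in>fs. involution_on F f"
  shows "inj_on Union (Pow (orbits fs F))"
proof (rule inj_onI)
  fix U1 U2 assume U: "U1 \<in> Pow (orbits fs F)" "U2 \<in> Pow (orbits fs F)" "\<Union>U1 = \<Union>U2"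
  show "U1 = U2"
  proof (intro equalityI subsetI)
    fix V assume "V \<in> U1"
    then show "V \<in> U2" using U orbit_mem_if_subset_Union[OF assms, of V U2] by blast
  next
    fix V assume "V \<in> U2"
    then show "V \<in> U1" using U orbit_mem_if_subset_Union[OF assms, of V U1] by blast
  qed
qed

lemma closed_subsets_eq_Union_orbits:
  assumes "closed_under fs F"
  shows "{S. S \<subseteq> F \<and> closed_under fs S} = Union ` Pow (orbits fs F)"
proof (intro set_eqI iffI)
  fix S assume S: "S \<in> {S. S \<subseteq> F \<and> closed_under fs S}"
  have "x \<in> \<Union>{V \<in> orbits fs F. V \<subseteq> S}" if "x \<in> S" for x
  proof -
    have "orbit_of fs x \<in> orbits fs F" using S that unfolding orbits_def by blast
    moreover have "orbit_of fs x \<subseteq> S" using S that by (intro orbit_of_least) auto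
    ultimately show ?thesis using orbit_of_refl[of x fs] by blast
  qed
  then have "S = \<Union>{V \<in> orbits fs F. V \<subseteq> S}" by blast
  then show "S \<in> Union ` Pow (orbits fs F)" by blast
next
  fix S assume "S \<in> Union ` Pow (orbits fs F)"
  then obtain U where U: "U \<subseteq> orbits fs F" "S = \<Union>U" by blast
  have "closed_under fs V \<and> V \<subseteq> F" if V: "V \<in> U" for V
  proof -
    obtain x where "x \<in> F" "V = orbit_of fs x" using V U(1) unfolding orbits_def by blast
    then show ?thesis using orbit_of_least[OF _ assms] by (simp add: closed_under_orbit_of)
  qed
  then have "closed_under fs S" "S \<subseteq> F" using U(2) by (fastforce simp: closed_under_def)+
  then show "S \<in> {S. S \<subseteq> F \<and> closed_under fs S}" by blast
qed

lemma card_closed_subsets: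
  assumes "finite F" and invs: "\<forall>f\<in>fs. involution_on F f"
  shows "card {S. S \<subseteq> F \<and> closed_under fs S} = 2 ^ card (orbits fs F)"
proof -
  have "closed_under fs F" using invs by (auto simp: closed_under_def involution_on_def)
  moreover have "finite (orbits fs F)" using assms(1) by (simp add: orbits_def)
  ultimately show ?thesis
    by (simp add: closed_subsets_eq_Union_orbits inj_on_Union_orbits[OF invs] card_image card_Pow)
qed

lemma nv_cong:
  assumes "flags G = flags H" "r1 G = r1 H" "isov G = isov H"
    and "\<forall>x\<in>flags H. r2 G x = r2 H x" and "closed_under {r1 H, r2 H} (flags H)"
  shows "nv G = nv H"
proof -
  have agree: "\<forall>g\<in>{r1 G, r2 G}. \<exists>f\<in>{r1 H, r2 H}. \<forall>y\<in>flags H. g y = f y"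
    and agree': "\<forall>g\<in>{r1 H, r2 H}. \<exists>f\<in>{r1 G, r2 G}. \<forall>y\<in>flags H. g y = f y"
    using assms(2,4) by auto
  have closed: "closed_under {r1 G, r2 G} (flags H)"
    using assms(2,4,5) unfolding closed_under_def by auto
  have "orbit_of {r1 G, r2 G} x = orbit_of {r1 H, r2 H} x" if "x \<in> flags H" for x
    using orbit_of_subset_agree[OF that assms(5) agree] orbit_of_subset_agree[OF that closed agree']
    by (rule subset_antisym)
  then have "vertices G = vertices H"
    unfolding vertices_eq_orbits orbits_eq_image assms(1) by (rule image_cong[OF refl])
  then show ?thesis using assms(3) by (simp add: nv_def)
qed

section \<open>Loops and the modified vertex involution\<close>

definition edge_of :: "'f rg \<Rightarrow> 'f \<Rightarrow> 'f set" where
  "edge_of G x = orbit_of {r0 G, r2 G} x"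

lemma edge_of_refl: "x \<in> edge_of G x"
  unfolding edge_of_def by (rule orbit_of_refl)

lemma edges_eq_image: "edges G = edge_of G ` flags G"
  by (auto simp: edges_def edge_of_def)

lemma edge_has_flag: "e \<in> edges G \<Longrightarrow> \<exists>y\<in>flags G. e = edge_of G y"
  using edges_eq_image[of G] by auto

lemma flags_empty_iff_edges_empty: "flags G = {} \<longleftrightarrow> edges G = {}"
  by (simp add: edges_eq_image)

text \<open>A label per loop records what an operation does to the vertex involution r2 at that
  loop: 0 keeps it, 1 replaces it by r0 (as \<open>\<delta>\<close> and \<open>\<tau>\<delta>\<close> do), 2 by r0 r2
  (as \<open>\<delta>\<tau>\<close> and \<open>\<tau>\<delta>\<tau>\<close> do).\<close>

definition mixed_r2 :: "'f rg \<Rightarrow> ('f set \<Rightarrow> nat) \<Rightarrow> 'f \<Rightarrow> 'f" where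
  "mixed_r2 G lab x = (if lab (edge_of G x) = 1 then r0 G x
     else if lab (edge_of G x) = 2 then r0 G (r2 G x) else r2 G x)"

definition touched :: "('f set \<Rightarrow> nat) \<Rightarrow> 'f set \<Rightarrow> bool" where
  "touched lab e \<longleftrightarrow> lab e = 1 \<or> lab e = 2"

text \<open>Read over GF(2), the kernel below is the null space of the intersection matrix of the
  touched loops with diagonal entries diag_entry; it only depends on the signed intersection
  graph and the labels.\<close>

definition diag_entry :: "'f rg \<Rightarrow> ('f set \<Rightarrow> nat) \<Rightarrow> 'f set \<Rightarrow> bool" where
  "diag_entry G lab e \<longleftrightarrow>
     (lab e = 1 \<and> \<not> orientable_loop G e) \<or> (lab e = 2 \<and> orientable_loop G e)"

definition interlace_kernel :: "'f rg \<Rightarrow> ('f set \<Rightarrow> nat) \<Rightarrow> 'f set set set" where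
  "interlace_kernel G lab = {T. T \<subseteq> {e \<in> edges G. touched lab e} \<and>
     (\<forall>e\<in>edges G. touched lab e \<longrightarrow>
        even (card {f\<in>T. interlaced G e f} + (if e \<in> T \<and> diag_entry G lab e then 1 else 0)))}"

text \<open>The number of vertices only depends on flags, r1, r2 and isov, so it suffices to track
  the modified r2.\<close>

definition relabel :: "('f set \<Rightarrow> nat) \<Rightarrow> 'f rg \<Rightarrow> 'f rg" where
  "relabel lab G = G\<lparr>r2 := mixed_r2 G lab\<rparr>"

lemma nv_relabel:
  "nv (relabel lab G) = card (orbits {r1 G, mixed_r2 G lab} (flags G)) + isov G"
  by (simp add: nv_def vertices_eq_orbits relabel_def)

locale gem =
  fixes G :: "'f rg"
  assumes ribbon: "ribbon_graph G"
begin

lemma finite_flags: "finite (flags G)" using ribbon by (simp add: ribbon_graph_def)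

lemma r0_in: "y \<in> flags G \<Longrightarrow> r0 G y \<in> flags G" and r0_r0: "y \<in> flags G \<Longrightarrow> r0 G (r0 G y) = y"
  and r0_neq: "y \<in> flags G \<Longrightarrow> r0 G y \<noteq> y"
  using ribbon by (auto simp: ribbon_graph_def fpf_invol_def)

lemma r1_in: "y \<in> flags G \<Longrightarrow> r1 G y \<in> flags G" and r1_r1: "y \<in> flags G \<Longrightarrow> r1 G (r1 G y) = y"
  and r1_neq: "y \<in> flags G \<Longrightarrow> r1 G y \<noteq> y"
  using ribbon by (auto simp: ribbon_graph_def fpf_invol_def)

lemma r2_in: "y \<in> flags G \<Longrightarrow> r2 G y \<in> flags G" and r2_r2: "y \<in> flags G \<Longrightarrow> r2 G (r2 G y) = y"
  and r2_neq: "y \<in> flags G \<Longrightarrow> r2 G y \<noteq> y"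
  using ribbon by (auto simp: ribbon_graph_def fpf_invol_def)

lemma r0_r2_comm: "y \<in> flags G \<Longrightarrow> r0 G (r2 G y) = r2 G (r0 G y)"
  and r0_neq_r2: "y \<in> flags G \<Longrightarrow> r0 G y \<noteq> r2 G y"
  using ribbon by (auto simp: ribbon_graph_def)

lemma involution_r0: "involution_on (flags G) (r0 G)"
  using r0_in r0_r0 by (simp add: involution_on_def)

lemma involution_r1: "involution_on (flags G) (r1 G)"
  using r1_in r1_r1 by (simp add: involution_on_def)

lemma involution_r2: "involution_on (flags G) (r2 G)"
  using r2_in r2_r2 by (simp add: involution_on_def)

lemma edge_of_eq: "y \<in> flags G \<Longrightarrow> edge_of G y = {y, r0 G y, r2 G y, r0 G (r2 G y)}"
proof
  assume y: "y \<in> flags G"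
  show "edge_of G y \<subseteq> {y, r0 G y, r2 G y, r0 G (r2 G y)}"
    unfolding edge_of_def
  proof (rule orbit_of_least, simp, unfold closed_under_def, intro ballI)
    fix z h assume z: "z \<in> {y, r0 G y, r2 G y, r0 G (r2 G y)}" and h: "h \<in> {r0 G, r2 G}"
    have a: "r2 G (r0 G y) = r0 G (r2 G y)" using r0_r2_comm[OF y] by simp
    have b: "r2 G (r0 G (r2 G y)) = r0 G y" using r0_r2_comm[OF r2_in[OF y]] r2_r2[OF y] by simp
    show "h z \<in> {y, r0 G y, r2 G y, r0 G (r2 G y)}"
      using z h a b r0_r0[OF y] r0_r0[OF r2_in[OF y]] r2_r2[OF y] by auto
  qed
  show "{y, r0 G y, r2 G y, r0 G (r2 G y)} \<subseteq> edge_of G y"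
    unfolding edge_of_def using orbit_of_refl[of y] orbit_of_step[of y "{r0 G, r2 G}" y]
      orbit_of_step[of "r2 G y" "{r0 G, r2 G}" y] by auto
qed

lemma edge_of_subset: "y \<in> flags G \<Longrightarrow> edge_of G y \<subseteq> flags G"
  using edge_of_eq r0_in r2_in by auto

lemma edge_of_in_edges: "y \<in> flags G \<Longrightarrow> edge_of G y \<in> edges G"
  using edges_eq_image[of G] by auto

lemma edge_eq_edge_of:
  assumes e: "e \<in> edges G" and y: "y \<in> e"
  shows "e = edge_of G y"
proof -
  from assms obtain x where x: "x \<in> flags G" "e = edge_of G x" using edges_eq_image[of G] by auto
  have "orbit_of {r0 G, r2 G} y = orbit_of {r0 G, r2 G} x"
    using orbit_of_eq[OF x(1), of "{r0 G, r2 G}" y] involution_r0 involution_r2 y x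
      by (auto simp: edge_of_def)
  then show ?thesis using x by (simp add: edge_of_def)
qed

lemma edge_subset_flags: "e \<in> edges G \<Longrightarrow> e \<subseteq> flags G"
  using edges_eq_image[of G] edge_of_subset by auto

lemma finite_edges: "finite (edges G)" using edges_eq_image[of G] finite_flags by simp

lemma edge_nonempty: "e \<in> edges G \<Longrightarrow> e \<noteq> {}"
  using edges_eq_image[of G] edge_of_refl[of _ G] by auto

lemma edge_of_r0: "y \<in> flags G \<Longrightarrow> edge_of G (r0 G y) = edge_of G y"
  using edge_eq_edge_of[OF edge_of_in_edges, of y "r0 G y"] edge_of_eq by auto

lemma edge_of_r2: "y \<in> flags G \<Longrightarrow> edge_of G (r2 G y) = edge_of G y"
  using edge_eq_edge_of[OF edge_of_in_edges, of y "r2 G y"] edge_of_eq by auto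

lemma r2_in_edge: "e \<in> edges G \<Longrightarrow> y \<in> e \<Longrightarrow> r2 G y \<in> e"
  using edge_eq_edge_of edge_of_eq edge_subset_flags by blast

lemma mixed_r2_in: "x \<in> flags G \<Longrightarrow> mixed_r2 G lab x \<in> flags G"
  by (simp add: mixed_r2_def r0_in r2_in)

lemma edge_of_mixed_r2: "x \<in> flags G \<Longrightarrow> edge_of G (mixed_r2 G lab x) = edge_of G x"
  by (simp add: mixed_r2_def edge_of_r0 edge_of_r2 r2_in)

lemma mixed_r2_mixed_r2:
  assumes x: "x \<in> flags G"
  shows "mixed_r2 G lab (mixed_r2 G lab x) = x"
proof -
  have e: "edge_of G (mixed_r2 G lab x) = edge_of G x" using edge_of_mixed_r2[OF x] .
  have "r0 G (r2 G (r0 G (r2 G x))) = x"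
    using r0_r2_comm[OF r2_in[OF x]] r2_r2[OF x] r0_r0[OF x] by simp
  then show ?thesis using e x unfolding mixed_r2_def
    by (auto simp: r0_r0 r2_r2 edge_of_r0 edge_of_r2 r2_in)
qed

lemma involution_mixed_r2: "involution_on (flags G) (mixed_r2 G lab)"
  using mixed_r2_in mixed_r2_mixed_r2 by (simp add: involution_on_def)

lemma mixed_r2_untouched: "\<not> touched lab (edge_of G x) \<Longrightarrow> mixed_r2 G lab x = r2 G x"
  by (simp add: mixed_r2_def touched_def)

lemma r2_mixed_r2_comm:
  assumes x: "x \<in> flags G" and tx: "touched lab (edge_of G x)"
  shows "r2 G (mixed_r2 G lab x) = mixed_r2 G lab (r2 G x)"
proof -
  have "r2 G (r0 G (r2 G x)) = r0 G x" using r0_r2_comm[OF r2_in[OF x]] r2_r2[OF x] by simp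
  then show ?thesis using tx x r0_r2_comm[OF x] unfolding mixed_r2_def touched_def
    by (auto simp: edge_of_r2 r2_r2)
qed

lemma edge_of_subset_mixed_r2:
  assumes x: "x \<in> flags G" and tx: "touched lab (edge_of G x)"
  shows "edge_of G x \<subseteq> {x, r2 G x, mixed_r2 G lab x, r2 G (mixed_r2 G lab x)}"
proof -
  have "r2 G (r0 G (r2 G x)) = r0 G x" using r0_r2_comm[OF r2_in[OF x]] r2_r2[OF x] by simp
  then show ?thesis using tx edge_of_eq[OF x] r0_r2_comm[OF x] unfolding mixed_r2_def touched_def
    by auto
qed

lemma bex_edge_mem_iff:
  assumes "A \<subseteq> edges G" and "x \<in> flags G"
  shows "(\<exists>e\<in>A. x \<in> e) \<longleftrightarrow> edge_of G x \<in> A"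
  using assms edge_eq_edge_of edge_of_refl[of x G] by blast

lemma bex_part_mem_iff:
  assumes "x \<in> flags G"
  shows "(\<exists>e\<in>part G c i. x \<in> e) \<longleftrightarrow> c (edge_of G x) = i"
  using bex_edge_mem_iff[of "part G c i" x] edge_of_in_edges[OF assms] assms
    by (auto simp: part_def)

lemma nv_eq_relabel:
  assumes "flags H = flags G" "r1 H = r1 G" "isov H = isov G"
    and "\<forall>x\<in>flags G. r2 H x = mixed_r2 G lab x"
  shows "nv H = nv (relabel lab G)"
proof (rule nv_cong)
  show "closed_under {r1 (relabel lab G), r2 (relabel lab G)} (flags (relabel lab G))"
    using r1_in mixed_r2_in by (simp add: relabel_def closed_under_def)
qed (use assms in \<open>simp_all add: relabel_def\<close>)

lemma nv_pdual:
  assumes "A \<subseteq> edges G"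
  shows "nv (pdual A G) = nv (relabel (\<lambda>e. if e \<in> A then 1 else 0) G)"
  by (rule nv_eq_relabel) (simp_all add: pdual_def mixed_r2_def bex_edge_mem_iff assms)

lemma nv_op_tdt:
  assumes "A \<subseteq> edges G"
  shows "nv (op_tdt A G) = nv (relabel (\<lambda>e. if e \<in> A then 2 else 0) G)"
  by (rule nv_eq_relabel) (simp_all add: op_tdt_def pdual_def ptwist_def mixed_r2_def
    bex_edge_mem_iff assms)

lemma nv_op_dt_op_td:
  "nv (op_dt (part G c 2) (op_td (part G c 1) G))
     = nv (relabel ((\<lambda>i. if i = 1 then 1 else if i = 2 then 2 else 0) \<circ> c) G)"
  by (rule nv_eq_relabel)
    (simp_all add: op_dt_def op_td_def pdual_def ptwist_def mixed_r2_def bex_part_mem_iff r2_in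
      r0_in edge_of_r2 edge_of_r0)

lemma nv_six_parts:
  "nv (op_tdt (part G c 5) (op_dt (part G c 4) (op_td (part G c 3)
      (ptwist (part G c 2) (pdual (part G c 1) G)))))
     = nv (relabel ((\<lambda>i. if i = 1 \<or> i = 3 then 1 else if i = 4 \<or> i = 5 then 2 else 0) \<circ> c) G)"
  by (rule nv_eq_relabel)
    (simp_all add: op_tdt_def op_dt_def op_td_def pdual_def ptwist_def mixed_r2_def
      bex_part_mem_iff r2_in r0_in edge_of_r2 edge_of_r0)

end

section \<open>Walking around the vertex of a bouquet\<close>

lemma card_filter_doubleton:
  assumes "a \<noteq> b"
  shows "card {i \<in> {a, b}. P i} = (if P a then 1 else 0) + (if P b then 1 else (0::nat))"
proof -
  have "{i \<in> {a, b}. P i} = (if P a then {a} else {}) \<union> (if P b then {b} else {})" by auto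
  then show ?thesis using assms by (simp split: if_split)
qed

text \<open>Slots a, b hold the ends of one loop and slots c, d those of another; px and pz are
  positions of flags in slots a and b. The ends c, d passed before reaching px and before
  reaching pz add up to an odd number exactly when the two loops alternate.\<close>

lemma interlace_count_parity:
  fixes a b c d px pz :: nat
  assumes "a \<noteq> b" "c \<noteq> d" "c \<noteq> a" "c \<noteq> b" "d \<noteq> a" "d \<noteq> b" "px div 2 = a" "pz div 2 = b"
  shows "even ((if 2*c < px then 1 else 0) + (if 2*d < px then 1 else 0)
             + (if 2*c < pz then 1 else 0) + (if 2*d < pz then 1 else 0) :: nat) \<longleftrightarrow>
    \<not> (\<exists>p1\<in>{a,b}. \<exists>p2\<in>{a,b}. \<exists>q1\<in>{c,d}. \<exists>q2\<in>{c,d}.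
        (p1 < q1 \<and> q1 < p2 \<and> p2 < q2) \<or> (q1 < p1 \<and> p1 < q2 \<and> q2 < p2))"
proof -
  have i1: "(2*c < px) = (c < a)" "(2*d < px) = (d < a)"
    "(2*c < pz) = (c < b)" "(2*d < pz) = (d < b)"
    using assms by auto
  show ?thesis unfolding i1 using assms(1-6)
    by (cases "a < b"; cases "c < d"; cases "c < a"; cases "c < b"; cases "d < a"; cases "d < b";
      simp)
qed

lemma self_count_parity:
  fixes a b px pz :: nat
  assumes "a \<noteq> b" "px div 2 = a" "pz div 2 = b"
  shows "even ((if 2*a < px then 1 else 0) + (if 2*b < px then 1 else 0)
             + (if 2*a < pz then 1 else 0) + (if 2*b < pz then 1 else 0) :: nat) \<longleftrightarrow>
    (even px \<noteq> even pz)"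
proof -
  have "(2*a < px) = odd px" "(2*b < pz) = odd pz" using assms(2,3) by presburger+
  moreover have "(2*b < px) = (b < a)" "(2*a < pz) = (a < b)" using assms by auto
  ultimately show ?thesis using assms(1) by (cases "a < b") auto
qed

locale nonempty_bouquet = gem B for B :: "'f rg" +
  assumes one_vertex: "card (vertices B) = 1" and flags_nonempty: "flags B \<noteq> {}"
begin

definition base where "base = (SOME x. x \<in> flags B)"

definition tour where "tour k = walk B base k"

definition n where "n = card (flags B)"

definition step :: "nat \<Rightarrow> 'f \<Rightarrow> 'f" where "step k = (if even k then r2 B else r1 B)"

lemma base_in: "base \<in> flags B" unfolding base_def using flags_nonempty by (simp add: some_in_eq)

lemma orbit_base: "orbit_of {r1 B, r2 B} base = flags B"
proof
  show "orbit_of {r1 B, r2 B} base \<subseteq> flags B"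
    using base_in r1_in r2_in by (intro orbit_of_least) (auto simp: closed_under_def)
  obtain v where v: "vertices B = {v}" using one_vertex by (auto simp: card_Suc_eq)
  have ov: "orbit_of {r1 B, r2 B} y = v" if "y \<in> flags B" for y
  proof -
    have "orbit_of {r1 B, r2 B} y \<in> vertices B" using that by (auto simp: vertices_def)
    then show ?thesis using v by simp
  qed
  show "flags B \<subseteq> orbit_of {r1 B, r2 B} base"
  proof
    fix y assume y: "y \<in> flags B"
    have "y \<in> orbit_of {r1 B, r2 B} y" by (rule orbit_of_refl)
    then show "y \<in> orbit_of {r1 B, r2 B} base" using ov[OF y] ov[OF base_in] by simp
  qed
qed

lemma tour_0: "tour 0 = base" by (simp add: tour_def)

lemma tour_Suc: "tour (Suc k) = step k (tour k)" by (simp add: tour_def step_def)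

lemma tour_in: "tour k \<in> flags B"
  by (induction k) (auto simp: tour_0 base_in tour_Suc step_def r1_in r2_in)

lemma step_step: "y \<in> flags B \<Longrightarrow> step k (step k y) = y" by (simp add: step_def r1_r1 r2_r2)

lemma step_neq: "y \<in> flags B \<Longrightarrow> step k y \<noteq> y" by (simp add: step_def r1_neq r2_neq)

lemma step_tour_Suc: "step k (tour (Suc k)) = tour k" by (simp add: tour_Suc step_step tour_in)

lemma step_parity: "even i = even j \<Longrightarrow> step i = step j" by (simp add: step_def)

text \<open>Stepping forward from i and backward from j applies the same involution, so equal flags
  at odd distance would propagate inwards to two consecutive equal flags.\<close>
lemma tour_odd_distance_neq: "odd (j - i) \<Longrightarrow> i < j \<Longrightarrow> tour i \<noteq> tour j"
proof (induction "j - i" arbitrary: i j rule: less_induct)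
  case less
  show ?case
  proof (cases "j = Suc i")
    case True then show ?thesis using step_neq[OF tour_in] tour_Suc by metis
  next
    case False
    then have j: "Suc i < j - 1" "j = Suc (j - 1)" using less by (auto simp: odd_pos) presburger+
    have "step i = step (j - 1)" using less(2) j by (intro step_parity) presburger
    show ?thesis
    proof
      assume eq: "tour i = tour j"
      have "tour (Suc i) = step i (tour i)" by (rule tour_Suc)
      also have "\<dots> = step (j - 1) (tour j)" using eq \<open>step i = step (j - 1)\<close> by simp
      also have "\<dots> = tour (j - 1)" using step_tour_Suc[of "j - 1"] j by simp
      finally have "tour (Suc i) = tour (j - 1)" .
      moreover have "tour (Suc i) \<noteq> tour (j - 1)"
        using less(1)[of "j - 1" "Suc i"] less(2,3) j by auto
      ultimately show False by simp
    qed
  qed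
qed

lemma tour_eq_shift: "i \<le> j \<Longrightarrow> tour i = tour j \<Longrightarrow> tour (j - i) = base"
proof (induction i arbitrary: j)
  case 0 then show ?case by (simp add: tour_0)
next
  case (Suc i)
  then obtain j' where j': "j = Suc j'" "i \<le> j'" by (cases j) auto
  have "even (j - Suc i)"
  proof (rule ccontr)
    assume "odd (j - Suc i)"
    then have "Suc i < j" by (cases "Suc i = j") auto
    then show False using tour_odd_distance_neq[OF \<open>odd (j - Suc i)\<close>] Suc.prems by simp
  qed
  then have "step i = step j'" using j' by (intro step_parity) presburger
  have "tour i = tour j'"
    using step_tour_Suc[of i] step_tour_Suc[of j'] Suc.prems j' \<open>step i = step j'\<close> by metis
  then show ?case using Suc.IH[of j'] j' by simp
qed

definition period where "period = (LEAST q. 0 < q \<and> tour q = base)"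

lemma ex_period: "\<exists>q. 0 < q \<and> q \<le> n \<and> tour q = base"
proof -
  have "\<not> inj_on tour {..n}"
  proof
    assume "inj_on tour {..n}"
    then have "card (tour ` {..n}) = Suc n" by (simp add: card_image)
    moreover have "tour ` {..n} \<subseteq> flags B" using tour_in by auto
    then have "card (tour ` {..n}) \<le> n" unfolding n_def using finite_flags by (intro card_mono) auto
    ultimately show False by simp
  qed
  then obtain i j where ij: "i \<le> n" "j \<le> n" "i \<noteq> j" "tour i = tour j" unfolding inj_on_def by auto
  show ?thesis
  proof (cases "i < j")
    case True then show ?thesis using tour_eq_shift[of i j] ij by (intro exI[of _ "j - i"]) auto
  next
    case False then show ?thesis using tour_eq_shift[of j i] ij by (intro exI[of _ "i - j"]) auto
  qed
qed

lemma period_spec: "0 < period" "tour period = base" "period \<le> n"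
proof -
  obtain q where q: "0 < q" "q \<le> n" "tour q = base" using ex_period by blast
  have "0 < period \<and> tour period = base" unfolding period_def
    by (rule LeastI[of _ q]) (use q in simp)
  then show "0 < period" "tour period = base" by auto
  have "period \<le> q" unfolding period_def by (rule Least_le) (use q in simp)
  then show "period \<le> n" using q by simp
qed

lemma period_least: "0 < q \<Longrightarrow> q < period \<Longrightarrow> tour q \<noteq> base"
  unfolding period_def using not_less_Least by blast

lemma even_period: "even period"
  using tour_odd_distance_neq[of period 0] period_spec by (auto simp: tour_0)

lemma tour_add_period: "tour (k + period) = tour k"
proof (induction k)
  case 0 then show ?case using period_spec by (simp add: tour_0)
next
  case (Suc k)
  have "step (k + period) = step k" using even_period by (intro step_parity) simp
  then show ?case using Suc by (simp add: tour_Suc)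
qed

lemma tour_add_mult_period: "tour (r + m * period) = tour r"
  by (induction m) (simp_all, metis add.assoc add.commute tour_add_period)

lemma tour_mod_period: "tour k = tour (k mod period)"
  using tour_add_mult_period[of "k mod period" "k div period"] by simp

lemma inj_on_tour_period: "inj_on tour {..<period}"
proof (rule inj_onI)
  fix i j assume ij: "i \<in> {..<period}" "j \<in> {..<period}" "tour i = tour j"
  show "i = j"
  proof (rule ccontr)
    assume "i \<noteq> j"
    then consider "i < j" | "j < i" by linarith
    then show False
    proof cases
      case 1
      moreover have "j - i < period" using ij 1 by auto
      ultimately show False using tour_eq_shift[of i j] period_least[of "j - i"] ij by auto
    next
      case 2
      moreover have "i - j < period" using ij 2 by auto
      ultimately show False using tour_eq_shift[of j i] period_least[of "i - j"] ij by auto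
    qed
  qed
qed

lemma range_tour_closed:
  assumes "y \<in> range tour"
  shows "r1 B y \<in> range tour \<and> r2 B y \<in> range tour"
proof -
  from assms obtain k where k: "y = tour k" by blast
  show ?thesis
  proof (cases "even k")
    case True
    have a: "r2 B y = tour (Suc k)" using k True by (simp add: tour_Suc step_def)
    have b: "r1 B y \<in> range tour"
    proof (cases k)
      case 0
      have "period = Suc (period - 1)" "odd (period - 1)" using period_spec even_period by auto
      then have "tour period = r1 B (tour (period - 1))"
        using tour_Suc[of "period - 1"] by (simp add: step_def)
      then have "r1 B base = tour (period - 1)" using period_spec r1_r1[OF tour_in] by simp
      then show ?thesis using 0 k by (simp add: tour_0)
    next
      case (Suc k')
      then have "odd k'" using True by simp
      then have "tour k = r1 B (tour k')" using Suc by (simp add: tour_Suc step_def)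
      then show ?thesis using k r1_r1[OF tour_in] by simp
    qed
    show ?thesis using a b by simp
  next
    case False
    have a: "r1 B y = tour (Suc k)" using k False by (simp add: tour_Suc step_def)
    obtain k' where "k = Suc k'" "even k'" using False by (cases k) auto
    then have "tour k = r2 B (tour k')" by (simp add: tour_Suc step_def)
    then have "r2 B y = tour k'" using k r2_r2[OF tour_in] by simp
    then show ?thesis using a by simp
  qed
qed

lemma range_tour: "range tour = flags B"
proof
  show "range tour \<subseteq> flags B" using tour_in by auto
  have "orbit_of {r1 B, r2 B} base \<subseteq> range tour"
  proof (rule orbit_of_least)
    show "base \<in> range tour" using tour_0 by (metis rangeI)
    show "closed_under {r1 B, r2 B} (range tour)"
      using range_tour_closed by (simp add: closed_under_def)
  qed
  then show "flags B \<subseteq> range tour" using orbit_base by simp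
qed

lemma tour_image_period: "tour ` {..<period} = flags B"
proof -
  have "range tour \<subseteq> tour ` {..<period}"
  proof
    fix y assume "y \<in> range tour"
    then obtain k where "y = tour k" by blast
    then have "y = tour (k mod period)" using tour_mod_period by simp
    moreover have "k mod period < period" using period_spec by simp
    ultimately show "y \<in> tour ` {..<period}" by blast
  qed
  then show ?thesis using range_tour by auto
qed

lemma period_eq_n: "period = n"
  using card_image[OF inj_on_tour_period] tour_image_period by (simp add: n_def)

lemma n_pos: "0 < n" and n_even: "even n"
  using period_eq_n period_spec even_period by auto

lemma tour_n: "tour n = base" using period_eq_n period_spec by simp

lemma inj_on_tour: "inj_on tour {..<n}" using inj_on_tour_period period_eq_n by simp

lemma tour_image: "tour ` {..<n} = flags B" using tour_image_period period_eq_n by simp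

lemma tour_mod: "tour k = tour (k mod n)" using tour_mod_period period_eq_n by simp

lemma pos_eq: "pos B y = (LEAST k. tour k = y)"
  by (simp add: pos_def tour_def base_def)

lemma pos_tour: "k < n \<Longrightarrow> pos B (tour k) = k"
  unfolding pos_eq
proof (rule Least_equality)
  fix j assume "k < n" "tour j = tour k"
  moreover have "j mod n < n" using n_pos by simp
  ultimately have "j mod n = k" using inj_on_tour tour_mod[of j] by (auto dest: inj_onD)
  then show "k \<le> j" by (metis mod_less_eq_dividend)
qed simp

lemma pos_less: "y \<in> flags B \<Longrightarrow> pos B y < n" and tour_pos: "y \<in> flags B \<Longrightarrow> tour (pos B y) = y"
proof -
  assume "y \<in> flags B"
  then obtain k where "k < n" "y = tour k" using tour_image by auto
  then show "pos B y < n" "tour (pos B y) = y" using pos_tour by auto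
qed

lemma pos_inj: "y \<in> flags B \<Longrightarrow> z \<in> flags B \<Longrightarrow> pos B y = pos B z \<Longrightarrow> y = z"
  using tour_pos by metis

lemma pos_base: "pos B base = 0" using pos_tour[of 0] n_pos by (simp add: tour_0)

lemma pos_r2:
  assumes y: "y \<in> flags B"
  shows "pos B (r2 B y) = (if even (pos B y) then pos B y + 1 else pos B y - 1)"
proof -
  define k where "k = pos B y"
  have k: "k < n" "tour k = y" using pos_less[OF y] tour_pos[OF y] k_def by auto
  show ?thesis
  proof (cases "even k")
    case True
    then have "k + 1 < n" using k n_even by (metis Suc_eq_plus1 Suc_lessI even_Suc)
    moreover have "r2 B y = tour (k + 1)" using True k by (simp add: tour_Suc step_def)
    ultimately show ?thesis using True k_def pos_tour by simp
  next
    case False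
    obtain k' where k': "k = Suc k'" "even k'" using False by (cases k) auto
    then have "y = r2 B (tour k')" using k by (simp add: tour_Suc step_def)
    then have "r2 B y = tour k'" using r2_r2[OF tour_in] by simp
    then show ?thesis using False k_def k' pos_tour k by simp
  qed
qed

lemma pos_r1_odd:
  assumes y: "y \<in> flags B" and o: "odd (pos B y)"
  shows "pos B (r1 B y) = (if pos B y + 1 = n then 0 else pos B y + 1)"
proof -
  define k where "k = pos B y"
  have k: "k < n" "tour k = y" using pos_less[OF y] tour_pos[OF y] k_def by auto
  have "r1 B y = tour (k + 1)" using o k k_def by (simp add: tour_Suc step_def)
  then show ?thesis using k k_def pos_tour tour_n pos_base by auto
qed

lemma pos_r1_even:
  assumes y: "y \<in> flags B" and e: "even (pos B y)"
  shows "odd (pos B (r1 B y))"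
proof -
  define k where "k = pos B y"
  have k: "k < n" "tour k = y" using pos_less[OF y] tour_pos[OF y] k_def by auto
  show ?thesis
  proof (cases k)
    case 0
    have "n = Suc (n - 1)" "odd (n - 1)" using n_pos n_even by auto
    then have "tour n = r1 B (tour (n - 1))" using tour_Suc[of "n - 1"] by (simp add: step_def)
    then have "r1 B y = tour (n - 1)" using tour_n k 0 r1_r1[OF tour_in, of "n - 1"]
      by (simp add: tour_0)
    then show ?thesis using pos_tour[of "n - 1"] n_pos \<open>odd (n - 1)\<close> by simp
  next
    case (Suc k')
    then have "odd k'" using e k_def by simp
    then have "y = r1 B (tour k')" using k Suc by (simp add: tour_Suc step_def)
    then have "r1 B y = tour k'" using r1_r1[OF tour_in] by simp
    then show ?thesis using pos_tour[of k'] Suc k \<open>odd k'\<close> by simp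
  qed
qed

lemma same_end_cases:
  assumes y: "y \<in> flags B" and z: "z \<in> flags B" and d: "pos B z div 2 = pos B y div 2"
  shows "z = y \<or> z = r2 B y"
proof -
  show ?thesis
  proof (cases "pos B z = pos B y")
    case True then show ?thesis using pos_inj y z by blast
  next
    case False
    then have "pos B z = pos B (r2 B y)" using pos_r2[OF y] d by auto presburger+
    then show ?thesis using pos_inj[OF z r2_in[OF y]] by blast
  qed
qed

lemma pos_r2_div2: "y \<in> flags B \<Longrightarrow> pos B (r2 B y) div 2 = pos B y div 2"
  using pos_r2 by auto presburger

lemma even_pos_r2: "y \<in> flags B \<Longrightarrow> even (pos B (r2 B y)) = odd (pos B y)"
  using pos_r2 by auto

lemma end_pos_edge_of:
  assumes y: "y \<in> flags B"
  shows "end_pos B (edge_of B y) = {pos B y div 2, pos B (r0 B y) div 2}"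
proof -
  have "pos B (r0 B (r2 B y)) div 2 = pos B (r0 B y) div 2"
    using r0_r2_comm[OF y] pos_r2_div2[OF r0_in[OF y]] by simp
  then show ?thesis using edge_of_eq[OF y] pos_r2_div2[OF y] by (auto simp: end_pos_def)
qed

lemma end_r0_neq: "y \<in> flags B \<Longrightarrow> pos B (r0 B y) div 2 \<noteq> pos B y div 2"
  using same_end_cases[of y "r0 B y"] r0_in r0_neq r0_neq_r2 by auto

lemma end_pos_mem_iff: "e \<in> edges B \<Longrightarrow> y \<in> flags B \<Longrightarrow> (pos B y div 2 \<in> end_pos B e) = (y \<in> e)"
proof
  assume e: "e \<in> edges B" and y: "y \<in> flags B" and i: "pos B y div 2 \<in> end_pos B e"
  then obtain z where z: "z \<in> e" "pos B y div 2 = pos B z div 2" by (auto simp: end_pos_def)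
  then have "y = z \<or> y = r2 B z" using same_end_cases[of z y] edge_subset_flags[OF e] y by auto
  then show "y \<in> e" using z r2_in_edge[OF e] by auto
qed (auto simp: end_pos_def)

lemma end_pos_disjoint: "e \<in> edges B \<Longrightarrow> f \<in> edges B \<Longrightarrow> e \<noteq> f \<Longrightarrow> i \<in> end_pos B e \<Longrightarrow> i \<notin> end_pos B f"
proof
  assume e: "e \<in> edges B" and f: "f \<in> edges B" and ne: "e \<noteq> f" and ie: "i \<in> end_pos B e" and iff:
    "i \<in> end_pos B f"
  then obtain y where y: "y \<in> e" "i = pos B y div 2" by (auto simp: end_pos_def)
  then have "y \<in> f" using end_pos_mem_iff[OF f] edge_subset_flags[OF e] iff by auto
  then show False using edge_eq_edge_of[OF e y(1)] edge_eq_edge_of[OF f] ne by auto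
qed

definition loop_ends_before :: "'f set \<Rightarrow> nat \<Rightarrow> nat" where
  "loop_ends_before f k = card {i \<in> end_pos B f. 2 * i < k}"

lemma loop_ends_before_eq:
  assumes y: "y \<in> flags B"
  shows "loop_ends_before (edge_of B y) k
    = (if 2 * (pos B y div 2) < k then 1 else 0)
      + (if 2 * (pos B (r0 B y) div 2) < k then 1 else 0)"
  using card_filter_doubleton[OF end_r0_neq[OF y, symmetric]]
  by (simp add: loop_ends_before_def end_pos_edge_of[OF y])

lemma loop_ends_before_last:
  assumes "e \<in> edges B"
  shows "loop_ends_before e (n - 1) = 2"
proof -
  from assms obtain y where y: "y \<in> flags B" "e = edge_of B y" using edge_has_flag by blast
  have "pos B y < n" "pos B (r0 B y) < n" using pos_less y r0_in by auto
  then have "2 * (pos B y div 2) < n - 1" "2 * (pos B (r0 B y) div 2) < n - 1"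
    using n_even by auto presburger+
  then show ?thesis using loop_ends_before_eq[OF y(1)] y by simp
qed

lemma loop_ends_before_odd_Suc:
  assumes "e \<in> edges B" "odd k"
  shows "loop_ends_before e (Suc k) = loop_ends_before e k"
proof -
  from assms obtain y where y: "y \<in> flags B" "e = edge_of B y" using edge_has_flag by blast
  have "\<And>j. (2 * j < Suc k) = (2 * j < k)" using \<open>odd k\<close> by presburger
  then show ?thesis using loop_ends_before_eq[OF y(1)] y by simp
qed

lemma loop_ends_before_even_Suc:
  assumes e: "e \<in> edges B" and yF: "y \<in> flags B" and ev: "even (pos B y)"
  shows "loop_ends_before e (Suc (pos B y))
    = loop_ends_before e (pos B y) + (if y \<in> e then 1 else 0)"
proof -
  from assms obtain x where x: "x \<in> flags B" "e = edge_of B x" using edge_has_flag by blast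
  define a where "a = pos B x div 2"
  define b where "b = pos B (r0 B x) div 2"
  define j where "j = pos B y div 2"
  have ab: "a \<noteq> b" using end_r0_neq[OF x(1)] a_def b_def by simp
  have "(y \<in> e) = (j \<in> end_pos B e)" using end_pos_mem_iff[OF e yF] j_def by simp
  also have "\<dots> = (j = a \<or> j = b)" using end_pos_edge_of[OF x(1)] x a_def b_def by simp
  finally have ye: "(y \<in> e) = (j = a \<or> j = b)" .
  have pj: "pos B y = 2 * j" using ev j_def by simp
  have "\<And>i. (2 * i < Suc (2 * j)) = (2 * i < 2 * j \<or> i = j)" by auto
  then show ?thesis using loop_ends_before_eq[OF x(1)] x ye pj ab a_def[symmetric]
    b_def[symmetric] by auto
qed

lemma loop_ends_before_parity_interlaced:
  assumes e: "e \<in> edges B" and f: "f \<in> edges B" and ef: "e \<noteq> f"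
    and x: "x \<in> e" and z: "z \<in> e" and xz: "pos B z div 2 \<noteq> pos B x div 2"
  shows "even (loop_ends_before f (pos B x) + loop_ends_before f (pos B z)) = (\<not> interlaced B e f)"
proof -
  obtain y where y: "y \<in> flags B" "f = edge_of B y" using edge_has_flag f by blast
  define a where "a = pos B x div 2"
  define b where "b = pos B z div 2"
  define c where "c = pos B y div 2"
  define d where "d = pos B (r0 B y) div 2"
  have xF: "x \<in> flags B" and zF: "z \<in> flags B" using x z edge_subset_flags e by auto
  obtain y' where y': "y' \<in> flags B" "e = edge_of B y'" using edge_has_flag e by blast
  have "end_pos B e = {pos B y' div 2, pos B (r0 B y') div 2}" using end_pos_edge_of y' by simp
  moreover have "a \<in> end_pos B e" "b \<in> end_pos B e"
    using x z a_def b_def by (auto simp: end_pos_def)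
  moreover have "a \<noteq> b" using xz a_def b_def by simp
  ultimately have Ee: "end_pos B e = {a, b}" by auto
  have Ef: "end_pos B f = {c, d}" using end_pos_edge_of y c_def d_def by simp
  have cd: "c \<noteq> d" using end_r0_neq[OF y(1)] c_def d_def by simp
  have disj: "c \<noteq> a" "c \<noteq> b" "d \<noteq> a" "d \<noteq> b"
    using end_pos_disjoint[OF e f ef] Ee Ef by auto
  have "even (loop_ends_before f (pos B x) + loop_ends_before f (pos B z)) =
     even ((if 2*c < pos B x then 1 else 0) + (if 2*d < pos B x then 1 else 0)
             + (if 2*c < pos B z then 1 else 0) + (if 2*d < pos B z then 1 else 0) :: nat)"
    using loop_ends_before_eq[OF y(1)] y c_def[symmetric] d_def[symmetric]
      by (simp add: algebra_simps)
  also have "\<dots> = (\<not> (\<exists>p1\<in>{a,b}. \<exists>p2\<in>{a,b}. \<exists>q1\<in>{c,d}. \<exists>q2\<in>{c,d}.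
        (p1 < q1 \<and> q1 < p2 \<and> p2 < q2) \<or> (q1 < p1 \<and> p1 < q2 \<and> q2 < p2)))"
    using interlace_count_parity[OF \<open>a \<noteq> b\<close> cd disj a_def[symmetric] b_def[symmetric]] .
  also have "\<dots> = (\<not> interlaced B e f)"
    unfolding interlaced_def Ee Ef using ef by simp
  finally show ?thesis .
qed

lemma loop_ends_before_parity_self:
  assumes e: "e \<in> edges B" and x: "x \<in> e" and z: "z \<in> e" and xz: "pos B z div 2 \<noteq> pos B x div 2"
  shows "even (loop_ends_before e (pos B x) + loop_ends_before e (pos B z))
    = (even (pos B x) \<noteq> even (pos B z))"
proof -
  define a where "a = pos B x div 2"
  define b where "b = pos B z div 2"
  have xF: "x \<in> flags B" using x e edge_subset_flags by auto
  have ee: "e = edge_of B x" using edge_eq_edge_of[OF e x] .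
  have "end_pos B e = {pos B x div 2, pos B (r0 B x) div 2}" using end_pos_edge_of xF ee by simp
  moreover have "b \<in> end_pos B e" using z b_def by (auto simp: end_pos_def)
  moreover have "a \<noteq> b" using xz a_def b_def by simp
  ultimately have "pos B (r0 B x) div 2 = b" using a_def by auto
  then have "even (loop_ends_before e (pos B x) + loop_ends_before e (pos B z)) =
     even ((if 2*a < pos B x then 1 else 0) + (if 2*b < pos B x then 1 else 0)
             + (if 2*a < pos B z then 1 else 0) + (if 2*b < pos B z then 1 else 0) :: nat)"
    using loop_ends_before_eq[OF xF] ee a_def by (simp add: algebra_simps)
  also have "\<dots> = (even (pos B x) \<noteq> even (pos B z))"
    using self_count_parity[OF \<open>a \<noteq> b\<close> a_def[symmetric] b_def[symmetric]] .
  finally show ?thesis .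
qed

section \<open>Closed flag sets and the interlace kernel\<close>

text \<open>Along the tour, membership in a closed set S flips exactly at the ends of the loops in
  switch_loops S; flip_set T is the set obtained by flipping at the ends of the loops in T,
  starting outside.\<close>

definition closed_sets :: "('f set \<Rightarrow> nat) \<Rightarrow> 'f set set" where
  "closed_sets lab = {S. S \<subseteq> flags B \<and> closed_under {r1 B, mixed_r2 B lab} S}"

definition switch_loops :: "'f set \<Rightarrow> 'f set set" where
  "switch_loops S = {e \<in> edges B. \<exists>x\<in>e. (x \<in> S) \<noteq> (r2 B x \<in> S)}"

definition ends_before :: "'f set set \<Rightarrow> nat \<Rightarrow> nat" where
  "ends_before T k = (\<Sum>f\<in>T. loop_ends_before f k)"

definition flip_set :: "'f set set \<Rightarrow> 'f set" where
  "flip_set T = {x \<in> flags B. odd (ends_before T (pos B x))}"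

lemma closed_sets_iff:
  "S \<in> closed_sets lab \<longleftrightarrow> S \<subseteq> flags B \<and> (\<forall>x\<in>S. r1 B x \<in> S \<and> mixed_r2 B lab x \<in> S)"
  by (simp add: closed_sets_def closed_under_def)

lemma orientable_loop_edge_of_iff:
  assumes x: "x \<in> flags B"
  shows "orientable_loop B (edge_of B x) = (even (pos B x) = odd (pos B (r0 B x)))"
proof -
  have a: "even (pos B (r2 B x)) = odd (pos B x)" using even_pos_r2[OF x] .
  have b: "even (pos B (r0 B (r2 B x))) = odd (pos B (r0 B x))"
    using even_pos_r2[OF r0_in[OF x]] r0_r2_comm[OF x] by simp
  have c: "r0 B (r0 B (r2 B x)) = r2 B x" using r0_r0[OF r2_in[OF x]] .
  show ?thesis unfolding orientable_loop_def edge_of_eq[OF x] using a b c r0_r0[OF x] by auto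
qed

lemma end_mixed_r2_neq:
  assumes x: "x \<in> flags B" and tx: "touched lab (edge_of B x)"
  shows "pos B (mixed_r2 B lab x) div 2 \<noteq> pos B x div 2"
proof -
  have "pos B (r0 B (r2 B x)) div 2 = pos B (r0 B x) div 2"
    using r0_r2_comm[OF x] pos_r2_div2[OF r0_in[OF x]] by simp
  then show ?thesis using tx end_r0_neq[OF x] unfolding mixed_r2_def touched_def by auto
qed

lemma parity_mixed_r2_iff_diag:
  assumes x: "x \<in> flags B" and tx: "touched lab (edge_of B x)"
  shows "(even (pos B x) = even (pos B (mixed_r2 B lab x))) = diag_entry B lab (edge_of B x)"
proof -
  have "even (pos B (r0 B (r2 B x))) = odd (pos B (r0 B x))"
    using even_pos_r2[OF r0_in[OF x]] r0_r2_comm[OF x] by simp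
  then show ?thesis using tx orientable_loop_edge_of_iff[OF x]
    unfolding mixed_r2_def touched_def diag_entry_def by auto
qed

lemma closed_mixed_r2_iff: "S \<in> closed_sets lab \<Longrightarrow> y \<in> flags B \<Longrightarrow> (mixed_r2 B lab y \<in> S) = (y \<in> S)"
  using involution_closed_mem_iff[OF involution_mixed_r2, of S] unfolding closed_sets_iff by blast

lemma closed_r1_iff: "S \<in> closed_sets lab \<Longrightarrow> y \<in> flags B \<Longrightarrow> (r1 B y \<in> S) = (y \<in> S)"
  using involution_closed_mem_iff[OF involution_r1, of S] unfolding closed_sets_iff by blast

lemma closed_r2_iff_untouched: "S \<in> closed_sets lab \<Longrightarrow> x \<in> flags B \<Longrightarrow> \<not> touched lab (edge_of B x)
  \<Longrightarrow> (r2 B x \<in> S) = (x \<in> S)"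
  using closed_mixed_r2_iff[of S lab x] mixed_r2_untouched[of lab x] by simp

lemma closed_switch_edge_of:
  assumes S: "S \<in> closed_sets lab" and x: "x \<in> flags B" and y: "y \<in> edge_of B x"
  shows "((y \<in> S) \<noteq> (r2 B y \<in> S)) = ((x \<in> S) \<noteq> (r2 B x \<in> S))"
proof -
  have yF: "y \<in> flags B" using y edge_of_subset[OF x] by auto
  have ey: "edge_of B y = edge_of B x" using edge_eq_edge_of[OF edge_of_in_edges[OF x] y] by simp
  show ?thesis
  proof (cases "touched lab (edge_of B x)")
    case False
    then show ?thesis using closed_r2_iff_untouched[OF S x] closed_r2_iff_untouched[OF S yF] ey
      by simp
  next
    case True
    have "y \<in> {x, r2 B x, mixed_r2 B lab x, r2 B (mixed_r2 B lab x)}"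
      using edge_of_subset_mixed_r2[OF x True] y by blast
    moreover have "(mixed_r2 B lab x \<in> S) = (x \<in> S)" using closed_mixed_r2_iff[OF S x] .
    moreover have "(r2 B (mixed_r2 B lab x) \<in> S) = (r2 B x \<in> S)"
      using closed_mixed_r2_iff[OF S r2_in[OF x]] r2_mixed_r2_comm[OF x True] by simp
    moreover have "r2 B (r2 B x) = x" "r2 B (r2 B (mixed_r2 B lab x)) = mixed_r2 B lab x"
      using r2_r2 x mixed_r2_in by auto
    ultimately show ?thesis by auto
  qed
qed

lemma switch_loops_iff: "S \<in> closed_sets lab \<Longrightarrow> x \<in> flags B
  \<Longrightarrow> (edge_of B x \<in> switch_loops S) = ((x \<in> S) \<noteq> (r2 B x \<in> S))"
proof
  assume S: "S \<in> closed_sets lab" and x: "x \<in> flags B"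
  show "(x \<in> S) \<noteq> (r2 B x \<in> S) \<Longrightarrow> edge_of B x \<in> switch_loops S"
    using edge_of_in_edges[OF x] edge_of_refl[of x] by (auto simp: switch_loops_def)
  assume "edge_of B x \<in> switch_loops S"
  then obtain y where "y \<in> edge_of B x" "(y \<in> S) \<noteq> (r2 B y \<in> S)" by (auto simp: switch_loops_def)
  then show "(x \<in> S) \<noteq> (r2 B x \<in> S)" using closed_switch_edge_of[OF S x] by blast
qed

lemma switch_loops_subset: "S \<in> closed_sets lab \<Longrightarrow> switch_loops S \<subseteq> {e \<in> edges B. touched lab e}"
proof
  fix e assume S: "S \<in> closed_sets lab" and e: "e \<in> switch_loops S"
  then have eE: "e \<in> edges B" by (simp add: switch_loops_def)
  obtain x where x: "x \<in> e" "(x \<in> S) \<noteq> (r2 B x \<in> S)" using e by (auto simp: switch_loops_def)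
  have xF: "x \<in> flags B" using x edge_subset_flags[OF eE] by auto
  have "e = edge_of B x" using edge_eq_edge_of[OF eE x(1)] .
  then have "touched lab e" using closed_r2_iff_untouched[OF S xF] x by auto
  then show "e \<in> {e \<in> edges B. touched lab e}" using eE by simp
qed

lemma ends_before_0: "ends_before T 0 = 0" by (simp add: ends_before_def loop_ends_before_def)

lemma ends_before_last: "T \<subseteq> edges B \<Longrightarrow> ends_before T (n - 1) = 2 * card T"
  unfolding ends_before_def using loop_ends_before_last by (simp add: subset_iff)

lemma ends_before_odd_Suc: "T \<subseteq> edges B \<Longrightarrow> odd k \<Longrightarrow> ends_before T (Suc k) = ends_before T k"
  unfolding ends_before_def using loop_ends_before_odd_Suc by (intro sum.cong) auto

lemma ends_before_even_Suc:
  assumes T: "T \<subseteq> edges B" and y: "y \<in> flags B" and ev: "even (pos B y)"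
  shows "ends_before T (Suc (pos B y)) = ends_before T (pos B y)
    + (if edge_of B y \<in> T then 1 else 0)"
proof -
  have fin: "finite T" using T finite_edges finite_subset by blast
  have "ends_before T (Suc (pos B y)) = (\<Sum>f\<in>T. loop_ends_before f (pos B y)
    + (if y \<in> f then 1 else 0))"
    unfolding ends_before_def using loop_ends_before_even_Suc[OF _ y ev] T by (intro sum.cong) auto
  also have "\<dots> = ends_before T (pos B y) + (\<Sum>f\<in>T. (if y \<in> f then 1 else 0))"
    by (simp add: sum.distrib ends_before_def)
  also have "(\<Sum>f\<in>T. (if y \<in> f then 1 else 0)) = card {f\<in>T. y \<in> f}"
    using fin by (simp add: sum.If_cases Int_def)
  also have "{f\<in>T. y \<in> f} = (if edge_of B y \<in> T then {edge_of B y} else {})"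
    using T edge_eq_edge_of edge_of_refl[of _ B] by auto
  finally show ?thesis by simp
qed

lemma ends_before_r2:
  assumes T: "T \<subseteq> edges B" and y: "y \<in> flags B"
  shows "odd (ends_before T (pos B (r2 B y))) = (odd (ends_before T (pos B y)) \<noteq> (edge_of B y \<in> T))"
proof -
  show ?thesis
  proof (cases "even (pos B y)")
    case True
    then show ?thesis using ends_before_even_Suc[OF T y True] pos_r2[OF y] by simp
  next
    case False
    have y2: "r2 B y \<in> flags B" "even (pos B (r2 B y))"
      using r2_in[OF y] even_pos_r2[OF y] False by auto
    have "pos B y = Suc (pos B (r2 B y))" using pos_r2[OF y] False by simp
    then show ?thesis using ends_before_even_Suc[OF T y2] edge_of_r2[OF y] by simp
  qed
qed

lemma ends_before_r1: "T \<subseteq> edges B \<Longrightarrow> y \<in> flags B \<Longrightarrow>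
   odd (ends_before T (pos B (r1 B y))) = odd (ends_before T (pos B y))"
proof -
  assume T: "T \<subseteq> edges B"
  have oddcase: "odd (ends_before T (pos B (r1 B u)))
    = odd (ends_before T (pos B u))" if u: "u \<in> flags B" "odd (pos B u)" for u
  proof (cases "pos B u + 1 = n")
    case True
    then have "pos B u = n - 1" by simp
    then show ?thesis using pos_r1_odd[OF u] True ends_before_last[OF T] ends_before_0 by simp
  next
    case False
    then show ?thesis using pos_r1_odd[OF u] ends_before_odd_Suc[OF T u(2)] by simp
  qed
  assume y: "y \<in> flags B"
  show ?thesis
  proof (cases "odd (pos B y)")
    case True then show ?thesis using oddcase[OF y] by simp
  next
    case False
    then have "odd (pos B (r1 B y))" using pos_r1_even[OF y] by simp
    then show ?thesis using oddcase[OF r1_in[OF y]] r1_r1[OF y] by simp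
  qed
qed

lemma ends_before_parity:
  assumes T: "T \<subseteq> edges B" and e: "e \<in> edges B" and x: "x \<in> e" and z: "z \<in> e"
    and xz: "pos B z div 2 \<noteq> pos B x div 2"
  shows "even (ends_before T (pos B x) + ends_before T (pos B z)) =
     even (card {f\<in>T. interlaced B e f} + (if e \<in> T \<and> even (pos B x)
       = even (pos B z) then 1 else 0))"
proof -
  have fin: "finite T" using T finite_edges finite_subset by blast
  define g where "g f = loop_ends_before f (pos B x) + loop_ends_before f (pos B z)" for f
  have "ends_before T (pos B x) + ends_before T (pos B z) = (\<Sum>f\<in>T. g f)"
    by (simp add: ends_before_def g_def sum.distrib)
  then have "even (ends_before T (pos B x) + ends_before T (pos B z))
    = even (card {f\<in>T. odd (g f)})"
    using even_sum_iff[OF fin] by simp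
  also have "{f\<in>T. odd (g f)} = {f\<in>T. interlaced B e f} \<union> (if e \<in> T \<and> even (pos B x)
    = even (pos B z) then {e} else {})"
  proof -
    have "odd (g f) = interlaced B e f" if "f \<in> T" "f \<noteq> e" for f
      using loop_ends_before_parity_interlaced[OF e _ _ x z xz, of f] that T unfolding g_def by auto
    moreover have "odd (g e) = (even (pos B x) = even (pos B z))"
      using loop_ends_before_parity_self[OF e x z xz] unfolding g_def by simp
    moreover have "\<not> interlaced B e e" by (simp add: interlaced_def)
    ultimately show ?thesis by auto
  qed
  also have "even (card \<dots>) = even (card {f\<in>T. interlaced B e f} + (if e \<in> T \<and> even (pos B x)
    = even (pos B z) then 1 else 0))"
  proof -
    have "e \<notin> {f\<in>T. interlaced B e f}" by (simp add: interlaced_def)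
    moreover have "finite {f\<in>T. interlaced B e f}" using fin by simp
    ultimately show ?thesis by auto
  qed
  finally show ?thesis .
qed

lemma closed_mem_tour: "S \<in> closed_sets lab \<Longrightarrow> k < n
  \<Longrightarrow> (tour k \<in> S) = ((base \<in> S) \<noteq> odd (ends_before (switch_loops S) k))"
proof (induction k)
  case 0 then show ?case by (simp add: tour_0 ends_before_0)
next
  case (Suc k)
  have T: "switch_loops S \<subseteq> edges B" using switch_loops_subset[OF Suc.prems(1)] by auto
  define y where "y = tour k"
  have y: "y \<in> flags B" "pos B y = k" using tour_in pos_tour Suc.prems y_def by auto
  show ?case
  proof (cases "even k")
    case True
    have "tour (Suc k) = r2 B y" using True y_def by (simp add: tour_Suc step_def)
    moreover have "(r2 B y \<in> S) = ((y \<in> S) \<noteq> (edge_of B y \<in> switch_loops S))"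
      using switch_loops_iff[OF Suc.prems(1) y(1)] by auto
    moreover have "ends_before (switch_loops S) (Suc k)
      = ends_before (switch_loops S) k + (if edge_of B y \<in> switch_loops S then 1 else 0)"
      using ends_before_even_Suc[OF T y(1)] y True by simp
    ultimately show ?thesis using Suc y_def by auto
  next
    case False
    have "tour (Suc k) = r1 B y" using False y_def by (simp add: tour_Suc step_def)
    moreover have "(r1 B y \<in> S) = (y \<in> S)" using closed_r1_iff[OF Suc.prems(1) y(1)] .
    moreover have "ends_before (switch_loops S) (Suc k) = ends_before (switch_loops S) k"
      using ends_before_odd_Suc[OF T] False by simp
    ultimately show ?thesis using Suc y_def by auto
  qed
qed

lemma closed_mem_iff: "S \<in> closed_sets lab \<Longrightarrow> x \<in> flags B
  \<Longrightarrow> (x \<in> S) = ((base \<in> S) \<noteq> odd (ends_before (switch_loops S) (pos B x)))"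
  using closed_mem_tour[of S lab "pos B x"] pos_less tour_pos by simp

lemma switch_loops_kernel:
  assumes S: "S \<in> closed_sets lab"
  shows "switch_loops S \<in> interlace_kernel B lab"
proof -
  have T: "switch_loops S \<subseteq> edges B" using switch_loops_subset[OF S] by auto
  have "even (card {f\<in>switch_loops S. interlaced B e f} + (if e \<in> switch_loops S
    \<and> diag_entry B lab e then 1 else 0))"
    if e: "e \<in> edges B" "touched lab e" for e
  proof -
    obtain x where x: "x \<in> e" using edge_nonempty[OF e(1)] by blast
    have xF: "x \<in> flags B" using x edge_subset_flags e by auto
    have ex: "e = edge_of B x" using edge_eq_edge_of[OF e(1) x] .
    have tx: "touched lab (edge_of B x)" using e ex by simp
    have z: "mixed_r2 B lab x \<in> e" using edge_of_mixed_r2[OF xF, of lab] ex edge_of_refl[of _ B]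
      by metis
    have "(mixed_r2 B lab x \<in> S) = (x \<in> S)" using closed_mixed_r2_iff[OF S xF] .
    then have "even (ends_before (switch_loops S) (pos B x)
      + ends_before (switch_loops S) (pos B (mixed_r2 B lab x)))"
      using closed_mem_iff[OF S xF] closed_mem_iff[OF S mixed_r2_in[OF xF]] by auto
    then show ?thesis using ends_before_parity[OF T e(1) x z end_mixed_r2_neq[OF xF tx]]
      parity_mixed_r2_iff_diag[OF xF tx] ex by simp
  qed
  then show ?thesis using switch_loops_subset[OF S] unfolding interlace_kernel_def by blast
qed

lemma flip_set_closed:
  assumes K: "T \<in> interlace_kernel B lab"
  shows "flip_set T \<in> closed_sets lab"
proof -
  have Tsub: "T \<subseteq> {e \<in> edges B. touched lab e}" using K by (simp add: interlace_kernel_def)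
  then have T: "T \<subseteq> edges B" by auto
  have "mixed_r2 B lab x \<in> flip_set T" if x: "x \<in> flip_set T" for x
  proof -
    have xF: "x \<in> flags B" using x by (simp add: flip_set_def)
    show ?thesis
    proof (cases "touched lab (edge_of B x)")
      case False
      then have "edge_of B x \<notin> T" using Tsub by auto
      then show ?thesis using ends_before_r2[OF T xF] mixed_r2_untouched[OF False] x r2_in[OF xF]
        by (simp add: flip_set_def)
    next
      case True
      have z: "mixed_r2 B lab x \<in> edge_of B x"
        using edge_of_mixed_r2[OF xF, of lab] edge_of_refl[of _ B] by metis
      have "even (card {f\<in>T. interlaced B (edge_of B x) f}
          + (if edge_of B x \<in> T \<and> diag_entry B lab (edge_of B x) then 1 else 0))"
        using K True edge_of_in_edges[OF xF] by (simp add: interlace_kernel_def)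
      then have "even (ends_before T (pos B x) + ends_before T (pos B (mixed_r2 B lab x)))"
        using ends_before_parity[OF T edge_of_in_edges[OF xF] edge_of_refl[of _ B] z
          end_mixed_r2_neq[OF xF True]] parity_mixed_r2_iff_diag[OF xF True] by simp
      then show ?thesis using x mixed_r2_in[OF xF] by (simp add: flip_set_def)
    qed
  qed
  moreover have "r1 B x \<in> flip_set T" if x: "x \<in> flip_set T" for x
    using x ends_before_r1[OF T] r1_in by (simp add: flip_set_def)
  ultimately show ?thesis by (auto simp: closed_sets_iff flip_set_def)
qed

lemma switch_loops_flip_set:
  assumes K: "T \<in> interlace_kernel B lab"
  shows "switch_loops (flip_set T) = T"
proof -
  from assms have T: "T \<subseteq> edges B" by (auto simp: interlace_kernel_def)
  have ch: "((x \<in> flip_set T) \<noteq> (r2 B x \<in> flip_set T))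
    = (edge_of B x \<in> T)" if x: "x \<in> flags B" for x
    using ends_before_r2[OF T x] x r2_in[OF x] by (auto simp: flip_set_def)
  show ?thesis
  proof (intro set_eqI iffI)
    fix e assume "e \<in> switch_loops (flip_set T)"
    then obtain x where x: "e \<in> edges B" "x \<in> e" "(x \<in> flip_set T) \<noteq> (r2 B x \<in> flip_set T)"
      by (auto simp: switch_loops_def)
    have xF: "x \<in> flags B" using x edge_subset_flags by auto
    then show "e \<in> T" using ch[OF xF] x edge_eq_edge_of by auto
  next
    fix e assume eT: "e \<in> T"
    then have e: "e \<in> edges B" using T by auto
    obtain x where x: "x \<in> e" using edge_nonempty[OF e] by blast
    have xF: "x \<in> flags B" using x edge_subset_flags e by auto
    have "edge_of B x \<in> T" using edge_eq_edge_of[OF e x] eT by simp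
    then show "e \<in> switch_loops (flip_set T)" using ch[OF xF] e x by (auto simp: switch_loops_def)
  qed
qed

lemma closed_sets_compl:
  assumes S: "S \<in> closed_sets lab"
  shows "flags B - S \<in> closed_sets lab"
proof -
  have "r1 B x \<in> flags B - S \<and> mixed_r2 B lab x \<in> flags B - S" if "x \<in> flags B - S" for x
  proof -
    have xF: "x \<in> flags B" "x \<notin> S" using that by auto
    show ?thesis
      using closed_mixed_r2_iff[OF S xF(1)] closed_r1_iff[OF S xF(1)] mixed_r2_in[OF xF(1)]
        r1_in[OF xF(1)] xF(2)
      by simp
  qed
  then show ?thesis unfolding closed_sets_iff by blast
qed

lemma switch_loops_compl:
  assumes S: "S \<in> closed_sets lab"
  shows "switch_loops (flags B - S) = switch_loops S"
proof -
  have "((x \<in> flags B - S) \<noteq> (r2 B x \<in> flags B - S)) = ((x \<in> S) \<noteq> (r2 B x \<in> S))"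
    if "x \<in> flags B" for x using that r2_in[OF that] by simp
  then show ?thesis unfolding switch_loops_def using edge_subset_flags by blast
qed

lemma base_notin_flip_set: "base \<notin> flip_set T" by (simp add: flip_set_def pos_base ends_before_0)

lemma closed_set_eq:
  assumes S: "S \<in> closed_sets lab"
  shows "S = (if base \<in> S then flags B - flip_set (switch_loops S) else flip_set (switch_loops S))"
proof -
  have SF: "S \<subseteq> flags B" using S by (simp add: closed_sets_iff)
  show ?thesis
    using closed_mem_iff[OF S] SF by (auto simp: flip_set_def)
qed

lemma card_closed_sets_kernel: "card (closed_sets lab) = 2 * card (interlace_kernel B lab)"
proof -
  define f where "f S = (switch_loops S, base \<in> S)" for S
  define g where "g = (\<lambda>(T, b). if b then flags B - flip_set T else flip_set T)"
  have "bij_betw f (closed_sets lab) (interlace_kernel B lab \<times> (UNIV :: bool set))"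
  proof (rule bij_betw_byWitness[where f' = g])
    show "\<forall>S\<in>closed_sets lab. g (f S) = S"
      using closed_set_eq unfolding f_def g_def by auto
    show "\<forall>a'\<in>interlace_kernel B lab \<times> UNIV. f (g a') = a'"
    proof
      fix a' assume a': "a' \<in> interlace_kernel B lab \<times> (UNIV :: bool set)"
      obtain T b where Tb: "a' = (T, b)" by (cases a')
      have K: "T \<in> interlace_kernel B lab" using a' Tb by simp
      have "switch_loops (flags B - flip_set T) = T"
        using switch_loops_compl[OF flip_set_closed[OF K]] switch_loops_flip_set[OF K] by simp
      then show "f (g a') = a'" using Tb switch_loops_flip_set[OF K] base_notin_flip_set base_in
        unfolding f_def g_def by auto
    qed
    show "f ` closed_sets lab \<subseteq> interlace_kernel B lab \<times> UNIV"
      using switch_loops_kernel unfolding f_def by auto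
    show "g ` (interlace_kernel B lab \<times> UNIV) \<subseteq> closed_sets lab"
      using flip_set_closed closed_sets_compl unfolding g_def by auto
  qed
  then have "card (closed_sets lab) = card (interlace_kernel B lab \<times> (UNIV :: bool set))"
    by (rule bij_betw_same_card)
  then show ?thesis by (simp add: card_cartesian_product)
qed

lemma card_orbits_kernel:
  "2 ^ card (orbits {r1 B, mixed_r2 B lab} (flags B)) = 2 * card (interlace_kernel B lab)"
  using card_closed_subsets[OF finite_flags, of "{r1 B, mixed_r2 B lab}"]
    involution_r1 involution_mixed_r2 card_closed_sets_kernel[of lab]
  by (simp add: closed_sets_def)

end

section \<open>Invariance under isomorphism of signed intersection graphs\<close>

lemma bouquet_empty: "bouquet B \<Longrightarrow> flags B = {} \<Longrightarrow> isov B = 1"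
  by (simp add: bouquet_def nv_def vertices_def)

lemma bouquet_nonempty:
  assumes "bouquet B" and "flags B \<noteq> {}"
  shows "nonempty_bouquet B" and "isov B = 0"
proof -
  have ribbon: "ribbon_graph B" and nv: "card (vertices B) + isov B = 1"
    using assms(1) by (auto simp: bouquet_def nv_def)
  have "finite (vertices B)" using ribbon by (simp add: vertices_def ribbon_graph_def)
  moreover have "vertices B \<noteq> {}" using assms(2) by (auto simp: vertices_def)
  ultimately have "card (vertices B) \<ge> 1" by (simp add: Suc_leI card_gt_0_iff)
  then have "card (vertices B) = 1" "isov B = 0" using nv by auto
  then show "nonempty_bouquet B" using ribbon assms(2)
    by (simp add: nonempty_bouquet_def nonempty_bouquet_axioms_def gem_def)
  show "isov B = 0" by fact
qed

lemma bouquet_gem: "bouquet B \<Longrightarrow> gem B"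
  by (simp add: bouquet_def gem_def)

definition signed_interlace_iso :: "'a rg \<Rightarrow> 'b rg \<Rightarrow> ('a set \<Rightarrow> 'b set) \<Rightarrow> bool" where
  "signed_interlace_iso B1 B2 \<phi> \<longleftrightarrow> bij_betw \<phi> (edges B1) (edges B2)
     \<and> (\<forall>e\<in>edges B1. \<forall>f\<in>edges B1. interlaced B1 e f \<longleftrightarrow> interlaced B2 (\<phi> e) (\<phi> f))
     \<and> (\<forall>e\<in>edges B1. orientable_loop B1 e \<longleftrightarrow> orientable_loop B2 (\<phi> e))"

lemma SI_iso_iff: "SI_iso B1 B2 \<longleftrightarrow> (\<exists>\<phi>. signed_interlace_iso B1 B2 \<phi>)"
  by (simp add: SI_iso_def signed_interlace_iso_def)

lemma signed_interlace_iso_bij: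
  "signed_interlace_iso B1 B2 \<phi> \<Longrightarrow> bij_betw \<phi> (edges B1) (edges B2)"
  by (simp add: signed_interlace_iso_def)

lemma image_mem_interlace_kernel_iff:
  assumes iso: "signed_interlace_iso B1 B2 \<phi>" and lab: "\<forall>e\<in>edges B1. lab2 (\<phi> e) = lab1 e"
    and T: "T \<subseteq> edges B1"
  shows "\<phi> ` T \<in> interlace_kernel B2 lab2 \<longleftrightarrow> T \<in> interlace_kernel B1 lab1"
proof -
  have il: "\<forall>e\<in>edges B1. \<forall>f\<in>edges B1. interlaced B1 e f \<longleftrightarrow> interlaced B2 (\<phi> e) (\<phi> f)"
    and ori: "\<forall>e\<in>edges B1. orientable_loop B1 e \<longleftrightarrow> orientable_loop B2 (\<phi> e)"
    using iso by (auto simp: signed_interlace_iso_def)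
  have inj: "inj_on \<phi> (edges B1)" and sur: "\<phi> ` edges B1 = edges B2"
    using signed_interlace_iso_bij[OF iso] by (auto simp: bij_betw_def)
  have touched: "touched lab2 (\<phi> e) = touched lab1 e" if "e \<in> edges B1" for e
    using lab that by (simp add: touched_def)
  have diag: "diag_entry B2 lab2 (\<phi> e) = diag_entry B1 lab1 e" if "e \<in> edges B1" for e
    using lab ori that by (simp add: diag_entry_def)
  have sub: "\<phi> ` T \<subseteq> {e \<in> edges B2. touched lab2 e} \<longleftrightarrow> T \<subseteq> {e \<in> edges B1. touched lab1 e}"
  proof -
    have "\<forall>x\<in>T. touched lab2 (\<phi> x) \<longleftrightarrow> touched lab1 x" using T touched by blast
    then show ?thesis using T sur unfolding image_subset_iff by auto
  qed
  have count: "card {f \<in> \<phi> ` T. interlaced B2 (\<phi> e) f} = card {f \<in> T. interlaced B1 e f}"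
    if e: "e \<in> edges B1" for e
  proof -
    have "{f \<in> \<phi> ` T. interlaced B2 (\<phi> e) f} = \<phi> ` {f \<in> T. interlaced B1 e f}"
      using il e T by auto
    moreover have "inj_on \<phi> {f \<in> T. interlaced B1 e f}"
      using inj T by (blast intro: inj_on_subset)
    ultimately show ?thesis by (simp add: card_image)
  qed
  have mem: "\<phi> e \<in> \<phi> ` T \<longleftrightarrow> e \<in> T" if "e \<in> edges B1" for e
    using inj T that by (auto dest: inj_onD)
  show ?thesis
    unfolding interlace_kernel_def mem_Collect_eq sub unfolding sur[symmetric] ball_simps
    using touched diag count mem by simp
qed

lemma interlace_kernel_image:
  assumes iso: "signed_interlace_iso B1 B2 \<phi>" and lab: "\<forall>e\<in>edges B1. lab2 (\<phi> e) = lab1 e"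
  shows "interlace_kernel B2 lab2 = image \<phi> ` interlace_kernel B1 lab1"
proof (intro set_eqI iffI)
  have sur: "\<phi> ` edges B1 = edges B2"
    using signed_interlace_iso_bij[OF iso] by (simp add: bij_betw_def)
  fix T2 assume T2: "T2 \<in> interlace_kernel B2 lab2"
  then have "T2 \<subseteq> edges B2" by (auto simp: interlace_kernel_def)
  then obtain T where "T \<subseteq> edges B1" "T2 = \<phi> ` T" using sur by (metis subset_imageE)
  then show "T2 \<in> image \<phi> ` interlace_kernel B1 lab1"
    using T2 image_mem_interlace_kernel_iff[OF iso lab] by blast
next
  fix T2 assume "T2 \<in> image \<phi> ` interlace_kernel B1 lab1"
  then obtain T where T: "T \<in> interlace_kernel B1 lab1" "T2 = \<phi> ` T" by blast
  moreover have "T \<subseteq> edges B1" using T(1) by (auto simp: interlace_kernel_def)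
  ultimately show "T2 \<in> interlace_kernel B2 lab2"
    using image_mem_interlace_kernel_iff[OF iso lab] by blast
qed

lemma card_interlace_kernel_eq:
  assumes iso: "signed_interlace_iso B1 B2 \<phi>" and lab: "\<forall>e\<in>edges B1. lab2 (\<phi> e) = lab1 e"
  shows "card (interlace_kernel B2 lab2) = card (interlace_kernel B1 lab1)"
proof -
  have "inj_on \<phi> (edges B1)" using signed_interlace_iso_bij[OF iso] by (simp add: bij_betw_def)
  then have "inj_on (image \<phi>) (interlace_kernel B1 lab1)"
    by (rule inj_on_subset[OF inj_on_image_Pow]) (auto simp: interlace_kernel_def)
  then show ?thesis using interlace_kernel_image[OF assms] by (simp add: card_image)
qed

lemma nv_relabel_eq:
  assumes b1: "bouquet B1" and b2: "bouquet B2" and iso: "signed_interlace_iso B1 B2 \<phi>"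
    and lab: "\<forall>e\<in>edges B1. lab2 (\<phi> e) = lab1 e"
  shows "nv (relabel lab1 B1) = nv (relabel lab2 B2)"
proof -
  have "\<phi> ` edges B1 = edges B2" using signed_interlace_iso_bij[OF iso] by (simp add: bij_betw_def)
  then have empty_iff: "flags B1 = {} \<longleftrightarrow> flags B2 = {}" by (auto simp: flags_empty_iff_edges_empty)
  show ?thesis
  proof (cases "flags B1 = {}")
    case True
    then show ?thesis using empty_iff bouquet_empty[OF b1] bouquet_empty[OF b2]
      by (simp add: nv_relabel orbits_def)
  next
    case False
    then have ne2: "flags B2 \<noteq> {}" using empty_iff by blast
    interpret b1: nonempty_bouquet B1 using bouquet_nonempty[OF b1 False] by simp
    interpret b2: nonempty_bouquet B2 using bouquet_nonempty[OF b2 ne2] by simp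
    have "(2::nat) ^ card (orbits {r1 B1, mixed_r2 B1 lab1} (flags B1))
        = 2 ^ card (orbits {r1 B2, mixed_r2 B2 lab2} (flags B2))"
      using b1.card_orbits_kernel b2.card_orbits_kernel card_interlace_kernel_eq[OF iso lab] by simp
    then show ?thesis
      using bouquet_nonempty(2)[OF b1 False] bouquet_nonempty(2)[OF b2 ne2]
      by (simp add: nv_relabel power_inject_exp)
  qed
qed

lemma sum_Pow_bij_transfer:
  assumes "bij_betw \<phi> E1 E2" and "\<And>A. A \<subseteq> E1 \<Longrightarrow> g2 (\<phi> ` A) = g1 A"
  shows "(\<Sum>A\<in>Pow E1. g1 A) = (\<Sum>A\<in>Pow E2. g2 A)"
proof -
  have "(\<Sum>A\<in>Pow E2. g2 A) = (\<Sum>A\<in>Pow E1. g2 (\<phi> ` A))"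
    by (rule sum.reindex_bij_betw[OF bij_betw_image_Pow[OF assms(1)], symmetric])
  also have "\<dots> = (\<Sum>A\<in>Pow E1. g1 A)" using assms(2) by (intro sum.cong) auto
  finally show ?thesis by simp
qed

lemma sum_PiE_bij_transfer:
  assumes bij: "bij_betw \<phi> E1 E2"
    and g: "\<And>c c'. c \<in> E1 \<rightarrow>\<^sub>E S \<Longrightarrow> \<forall>e\<in>E1. c' (\<phi> e) = c e \<Longrightarrow> g2 c' = g1 c"
  shows "(\<Sum>c\<in>E1 \<rightarrow>\<^sub>E S. g1 c) = (\<Sum>c\<in>E2 \<rightarrow>\<^sub>E S. g2 c)"
proof -
  define \<Phi> where "\<Phi> c = restrict (c \<circ> inv_into E1 \<phi>) E2" for c :: "'a \<Rightarrow> 'c"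
  have inv: "inv_into E1 \<phi> (\<phi> e) = e" "\<phi> e \<in> E2" if "e \<in> E1" for e
    using bij that by (auto simp: bij_betw_def inv_into_f_f)
  have inv': "\<phi> (inv_into E1 \<phi> e') = e'" "inv_into E1 \<phi> e' \<in> E1" if "e' \<in> E2" for e'
    using bij that by (auto simp: bij_betw_def f_inv_into_f inv_into_into)
  have "bij_betw \<Phi> (E1 \<rightarrow>\<^sub>E S) (E2 \<rightarrow>\<^sub>E S)"
  proof (rule bij_betw_byWitness[where f' = "\<lambda>c'. restrict (c' \<circ> \<phi>) E1"])
    show "\<forall>c\<in>E1 \<rightarrow>\<^sub>E S. restrict (\<Phi> c \<circ> \<phi>) E1 = c"
      using inv by (auto simp: \<Phi>_def PiE_def extensional_def fun_eq_iff)
    show "\<forall>c'\<in>E2 \<rightarrow>\<^sub>E S. \<Phi> (restrict (c' \<circ> \<phi>) E1) = c'"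
      using inv' by (auto simp: \<Phi>_def PiE_def extensional_def fun_eq_iff)
    show "\<Phi> ` (E1 \<rightarrow>\<^sub>E S) \<subseteq> E2 \<rightarrow>\<^sub>E S"
      using inv' by (auto simp: \<Phi>_def)
    show "(\<lambda>c'. restrict (c' \<circ> \<phi>) E1) ` (E2 \<rightarrow>\<^sub>E S) \<subseteq> E1 \<rightarrow>\<^sub>E S"
      using inv by auto
  qed
  then have "(\<Sum>c\<in>E2 \<rightarrow>\<^sub>E S. g2 c) = (\<Sum>c\<in>E1 \<rightarrow>\<^sub>E S. g2 (\<Phi> c))"
    by (rule sum.reindex_bij_betw[symmetric])
  also have "\<dots> = (\<Sum>c\<in>E1 \<rightarrow>\<^sub>E S. g1 c)"
    using g inv by (intro sum.cong) (auto simp: \<Phi>_def)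
  finally show ?thesis by simp
qed

lemma nv_relabel_image_eq:
  assumes b1: "bouquet B1" and b2: "bouquet B2" and iso: "signed_interlace_iso B1 B2 \<phi>"
    and A: "A \<subseteq> edges B1"
  shows "nv (relabel (\<lambda>e. if e \<in> \<phi> ` A then k else 0) B2)
    = nv (relabel (\<lambda>e. if e \<in> A then k else 0) B1)"
proof -
  have "inj_on \<phi> (edges B1)" using signed_interlace_iso_bij[OF iso] by (simp add: bij_betw_def)
  then have "\<forall>e\<in>edges B1. (if \<phi> e \<in> \<phi> ` A then k else 0) = (if e \<in> A then k else 0)"
    using A by (auto dest: inj_onD)
  then show ?thesis by (rule nv_relabel_eq[OF b1 b2 iso, symmetric])
qed

lemma nv_relabel_comp_eq:
  assumes b1: "bouquet B1" and b2: "bouquet B2" and iso: "signed_interlace_iso B1 B2 \<phi>"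
    and c: "\<forall>e\<in>edges B1. c' (\<phi> e) = c e"
  shows "nv (relabel (g \<circ> c') B2) = nv (relabel (g \<circ> c) B1)"
  using c by (intro nv_relabel_eq[OF b1 b2 iso, symmetric]) simp

lemma P_d_eq:
  fixes B1 :: "'a rg" and B2 :: "'b rg"
  assumes b1: "bouquet B1" and b2: "bouquet B2" and iso: "signed_interlace_iso B1 B2 \<phi>"
  shows "P_d B1 = P_d B2"
  unfolding P_d_def
proof (rule sum_Pow_bij_transfer[OF signed_interlace_iso_bij[OF iso]], goal_cases)
  case (1 A)
  moreover have "\<phi> ` A \<subseteq> edges B2"
    using 1 signed_interlace_iso_bij[OF iso] by (auto simp: bij_betw_def)
  ultimately show ?case
    using gem.nv_pdual[OF bouquet_gem[OF b1]] gem.nv_pdual[OF bouquet_gem[OF b2]]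
      nv_relabel_image_eq[OF b1 b2 iso]
    by simp
qed

lemma P_tdt_eq:
  fixes B1 :: "'a rg" and B2 :: "'b rg"
  assumes b1: "bouquet B1" and b2: "bouquet B2" and iso: "signed_interlace_iso B1 B2 \<phi>"
  shows "P_tdt B1 = P_tdt B2"
  unfolding P_tdt_def
proof (rule sum_Pow_bij_transfer[OF signed_interlace_iso_bij[OF iso]], goal_cases)
  case (1 A)
  moreover have "\<phi> ` A \<subseteq> edges B2"
    using 1 signed_interlace_iso_bij[OF iso] by (auto simp: bij_betw_def)
  ultimately show ?case
    using gem.nv_op_tdt[OF bouquet_gem[OF b1]] gem.nv_op_tdt[OF bouquet_gem[OF b2]]
      nv_relabel_image_eq[OF b1 b2 iso]
    by simp
qed

lemma P_dt_eq:
  fixes B1 :: "'a rg" and B2 :: "'b rg"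
  assumes b1: "bouquet B1" and b2: "bouquet B2" and iso: "signed_interlace_iso B1 B2 \<phi>"
  shows "P_dt B1 = P_dt B2"
  unfolding P_dt_def
proof (rule sum_PiE_bij_transfer[OF signed_interlace_iso_bij[OF iso]], goal_cases)
  case (1 c c')
  then show ?case
    using gem.nv_op_dt_op_td[OF bouquet_gem[OF b1], of c] gem.nv_op_dt_op_td[OF bouquet_gem[OF
      b2], of c']
      nv_relabel_comp_eq[OF b1 b2 iso 1(2)]
    by simp
qed

lemma P_dt_full_eq:
  fixes B1 :: "'a rg" and B2 :: "'b rg"
  assumes b1: "bouquet B1" and b2: "bouquet B2" and iso: "signed_interlace_iso B1 B2 \<phi>"
  shows "P_dt_full B1 = P_dt_full B2"
  unfolding P_dt_full_def
proof (rule sum_PiE_bij_transfer[OF signed_interlace_iso_bij[OF iso]], goal_cases)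
  case (1 c c')
  then show ?case
    using gem.nv_six_parts[OF bouquet_gem[OF b1], of c] gem.nv_six_parts[OF bouquet_gem[OF b2], of
      c']
      nv_relabel_comp_eq[OF b1 b2 iso 1(2)]
    by simp
qed

theorem mainTheorem8:
  fixes B1 :: "'a rg" and B2 :: "'b rg"
  assumes "bouquet B1" and "bouquet B2" and "SI_iso B1 B2"
  shows "P_d B1 = P_d B2 \<and> P_dt B1 = P_dt B2 \<and> P_tdt B1 = P_tdt B2
         \<and> P_dt_full B1 = P_dt_full B2"
proof -
  obtain \<phi> where iso: "signed_interlace_iso B1 B2 \<phi>"
    using assms(3) by (auto simp: SI_iso_iff)
  show ?thesis
    using P_d_eq[OF assms(1,2) iso] P_dt_eq[OF assms(1,2) iso] P_tdt_eq[OF assms(1,2) iso]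
      P_dt_full_eq[OF assms(1,2) iso]
    by simp
qed

end
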